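(* For every admissible index $i$ (i.e. $1\le i\le n$ if $s>n-1$, and $2\le i\le n$ if $s=n-1$), the irreducible component $K^i$ of $Y$ is given by \[ K^i=\{V_\bullet\in \mathrm{Fl}(1^n,s-1)\ \mid\ V_{i-1}\subseteq \mathrm{im}(x)\subseteq V_n\subseteq x^{-1}V_{i-1}\}, \] where $x^{-1}V_{i-1}$ denotes the preimage of $V_{i-1}$ under the linear map $x$.
   Context: Fix integers $n\ge 2$ and $s\ge n-1$, let $N=n+s-1$, and let $e_1,\dots,e_N$ be the standard basis of $\mathbb{C}^N$. Let $x:\mathbb{C}^N\to\mathbb{C}^N$ be the linear map with $xe_m=e_{m-(n-1)}$ for $n\le m\le 2n-2$ and $xe_m=0$ otherwise; thus $\mathrm{im}(x)=\mathrm{span}(e_1,\dots,e_{n-1})$ and $x$ is nilpotent of Jordan type $(2^{n-1},1^{s-n+1})$. Let $\mathrm{Fl}(1^n,s-1)$ be the variety of partial flags $V_\bullet=(0=V_0\subset V_1\subset\cdots\subset V_n\subset\mathbb{C}^N)$ with $\dim V_j=j$. The $\Delta$-Springer fiber is the closed subvariety $Y=Y_{n,(1^{n-1}),s}=\{V_\bullet\in\mathrm{Fl}(1^n,s-1)\mid \mathrm{im}(x)\subseteq V_n,\ xV_j\subseteq V_j \text{ for all } j\}$. For a sequence $w=(w_1,\dots,w_n)$ of distinct elements of $\{1,\dots,N\}$, the Schubert cell $X_w^\circ\subseteq \mathrm{Fl}(1^n,s-1)$ is the set of flags with $\dim(V_j\cap\mathrm{span}(e_1,\dots,e_m))=\#\{l\le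 j: w_l\le m\}$ for all $j,m$. For an admissible $i$ (namely $1\le i\le n$ if $s>n-1$, and $2\le i\le n$ if $s=n-1$) put $w^{(i)}=(n-1,n-2,\dots,n-i+1,\,N,\,n-i,n-i-1,\dots,1)$ and define $K^i$ to be the closure in $Y$ of $X^\circ_{w^{(i)}}\cap Y$. (It is known that these $K^i$ are exactly the irreducible components of $Y$, and that $Y$ has dimension $\binom{n-1}{2}+(s-1)$.) *)

theory Defs
  imports Complex_Main "HOL-Library.Function_Algebras"
begin

text \<open>Vectors of C^N are modelled as functions nat => complex supported on {1..N};
  the standard basis vector e_m is the indicator of m.\<close>

type_synonym cvec = "nat \<Rightarrow> complex"

definition cscale :: "complex \<Rightarrow> cvec \<Rightarrow> cvec" where
  "cscale c v = (\<lambda>k. c * v k)"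

interpretation cvs: vector_space cscale
  by unfold_locales (auto simp: cscale_def fun_eq_iff algebra_simps)

definition CN :: "nat \<Rightarrow> cvec set" where
  "CN N = {v. \<forall>k. (k < 1 \<or> N < k) \<longrightarrow> v k = 0}"

definition e :: "nat \<Rightarrow> cvec" where
  "e m = (\<lambda>k. if k = m then 1 else 0)"

definition Espan :: "nat \<Rightarrow> cvec set" where
  "Espan m = cvs.span (e ` {1..m})"

text \<open>The nilpotent map x: x e_m = e_(m-(n-1)) for n <= m <= 2n-2, x e_m = 0 otherwise.\<close>
definition xmap :: "nat \<Rightarrow> cvec \<Rightarrow> cvec" where
  "xmap n v = (\<lambda>k. if 1 \<le> k \<and> k \<le> n - 1 then v (k + (n - 1)) else 0)"

definition Fl :: "nat \<Rightarrow> nat \<Rightarrow> (nat \<Rightarrow> cvec set) set" where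
  "Fl N n = {V. (\<forall>j\<le>n. cvs.subspace (V j) \<and> V j \<subseteq> CN N \<and> cvs.dim (V j) = j)
               \<and> (\<forall>j<n. V j \<subseteq> V (Suc j)) \<and> (\<forall>j>n. V j = {0})}"

definition Yfib :: "nat \<Rightarrow> nat \<Rightarrow> (nat \<Rightarrow> cvec set) set" where
  "Yfib n s = {V \<in> Fl (n + s - 1) n.
      xmap n ` CN (n + s - 1) \<subseteq> V n \<and> (\<forall>j\<le>n. xmap n ` V j \<subseteq> V j)}"

text \<open>Schubert cell X_w^o for a sequence w = [w_1,...,w_n] (a list, w_l = w ! (l-1)).\<close>
definition schubert_cell :: "nat \<Rightarrow> nat \<Rightarrow> nat list \<Rightarrow> (nat \<Rightarrow> cvec set) set" where
  "schubert_cell N n w = {V \<in> Fl N n. \<forall>j\<le>n. \<forall>m\<le>N.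
      cvs.dim (V j \<inter> Espan m) = card {l. 1 \<le> l \<and> l \<le> j \<and> w ! (l - 1) \<le> m}}"

definition flag_of :: "nat \<Rightarrow> (nat \<Rightarrow> cvec) \<Rightarrow> (nat \<Rightarrow> cvec set)" where
  "flag_of n u = (\<lambda>j. if j \<le> n then cvs.span (u ` {1..j}) else {0})"

text \<open>Closure in the (classical) topology of Fl(1^n,s-1): the flag variety carries the quotient
  topology from the space of frames (n-tuples of vectors of C^N, with the Euclidean topology of
  their coordinates); since this quotient map is open, F lies in the closure of A iff some frame
  of F is a coordinatewise limit of frames of flags in A.\<close>
definition flag_closure :: "nat \<Rightarrow> nat \<Rightarrow> (nat \<Rightarrow> cvec set) set \<Rightarrow> (nat \<Rightarrow> cvec set) set" where
  "flag_closure N n A = {F \<in> Fl N n. \<exists>U u. (\<forall>k. flag_of n (U k) \<in> A) \<and> flag_of n u = F \<and>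
      (\<forall>j m. (\<lambda>k. U k j m) \<longlonglongrightarrow> u j m)}"

definition wi :: "nat \<Rightarrow> nat \<Rightarrow> nat \<Rightarrow> nat list" where
  "wi N n i = rev [n - i + 1..<n] @ [N] @ rev [1..<n - i + 1]"

definition Kcomp :: "nat \<Rightarrow> nat \<Rightarrow> nat \<Rightarrow> (nat \<Rightarrow> cvec set) set" where
  "Kcomp n s i = Yfib n s \<inter>
     flag_closure (n + s - 1) n (schubert_cell (n + s - 1) n (wi (n + s - 1) n i) \<inter> Yfib n s)"

end

theory Submission
  imports Defs
begin

text \<open>Write \<open>I = im x = Espan (n - 1)\<close>.  For a flag of the Schubert cell of \<open>wi N n i\<close> lying in \<open>Y\<close>,
  the dimensions of \<open>V j \<inter> Espan m\<close> force \<open>V (i - 1) \<subseteq> I\<close>, \<open>V n \<inter> Espan (N - 1) = I\<close> and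
  \<open>V (i - 1) = V i \<inter> Espan (N - 1)\<close>; \<open>x\<close>-stability of \<open>V i\<close> then gives \<open>x V n \<subseteq> V (i - 1)\<close>.  These
  conditions survive limits, because limits of vectors in the spans of converging independent frames
  lie in the span of the limit frame, so they hold on \<open>K\<^sup>i\<close>.

  Conversely, a flag satisfying them (and hence lying in \<open>Y\<close>) has an adapted frame with all vectors
  in \<open>I\<close> except one, \<open>u p\<close> with \<open>p \<ge> i\<close>, and \<open>x (u p) \<in> V (i - 1)\<close>.  Perturbing this frame by \<open>t\<close> times
  suitable coordinate vectors gives, for all but finitely many \<open>t\<close> (the exceptions are eigenvalues of
  finitely many matrices and roots of one polynomial), flags of the Schubert cell that still satisfy
  the conditions; letting \<open>t \<rightarrow> 0\<close> exhibits the flag as a point of \<open>K\<^sup>i\<close>.\<close>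

section \<open>Linear algebra in the coordinate space\<close>

lemma sum_fun_apply: "(sum f A) x = (\<Sum>a\<in>A. f a x)" for f :: "'b \<Rightarrow> nat \<Rightarrow> complex"
  by (induct A rule: infinite_finite_induct) auto

definition lincomb :: "'a set \<Rightarrow> ('a \<Rightarrow> complex) \<Rightarrow> ('a \<Rightarrow> cvec) \<Rightarrow> cvec" where
  "lincomb S c f = (\<lambda>m. \<Sum>l\<in>S. c l * f l m)"

lemma lincomb_apply: "lincomb S c f m = (\<Sum>l\<in>S. c l * f l m)"
  by (simp add: lincomb_def)

lemma sum_cscale_eq_lincomb: "(\<Sum>l\<in>S. cscale (c l) (f l)) = lincomb S c f"
  by (auto simp: lincomb_def fun_eq_iff sum_fun_apply cscale_def)

lemma lincomb_in_subspace:
  assumes "cvs.subspace T" "\<forall>l\<in>S. f l \<in> T"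
  shows "lincomb S c f \<in> T"
  unfolding sum_cscale_eq_lincomb[symmetric] using assms
  by (intro cvs.subspace_sum) (auto intro: cvs.subspace_scale)

lemma lincomb_in_span: "finite S \<Longrightarrow> lincomb S c f \<in> cvs.span (f ` S)"
  by (rule lincomb_in_subspace) (auto intro: cvs.span_base)

lemma lincomb_empty: "lincomb {} c f = 0"
  by (simp add: lincomb_def fun_eq_iff)

lemma lincomb_insert:
  "finite S \<Longrightarrow> l0 \<notin> S \<Longrightarrow> lincomb (insert l0 S) c f m = c l0 * f l0 m + lincomb S c f m"
  by (simp add: lincomb_def)

lemma lincomb_zero_coeffs: "\<forall>l\<in>S. c l = 0 \<Longrightarrow> lincomb S c f = 0"
  by (auto simp: lincomb_def fun_eq_iff intro!: sum.neutral)

lemma subspace_lincombs: "cvs.subspace (range (\<lambda>c. lincomb S c f))"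
  unfolding cvs.subspace_def
proof (intro conjI ballI allI)
  show "0 \<in> range (\<lambda>c. lincomb S c f)"
    using lincomb_zero_coeffs[of S "\<lambda>_. 0" f] by (metis rangeI)
  fix x y assume "x \<in> range (\<lambda>c. lincomb S c f)" "y \<in> range (\<lambda>c. lincomb S c f)"
  then obtain c d where "x = lincomb S c f" "y = lincomb S d f" by auto
  then have "x + y = lincomb S (\<lambda>l. c l + d l) f"
    by (auto simp: lincomb_def fun_eq_iff sum.distrib algebra_simps)
  then show "x + y \<in> range (\<lambda>c. lincomb S c f)" by (metis rangeI)
next
  fix a x assume "x \<in> range (\<lambda>c. lincomb S c f)"
  then obtain c where "x = lincomb S c f" by auto
  then have "cscale a x = lincomb S (\<lambda>l. a * c l) f"
    by (auto simp: lincomb_def fun_eq_iff sum_distrib_left cscale_def algebra_simps)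
  then show "cscale a x \<in> range (\<lambda>c. lincomb S c f)" by (metis rangeI)
qed

lemma span_image_eq_lincombs:
  assumes "finite S"
  shows "cvs.span (f ` S) = range (\<lambda>c. lincomb S c f)"
proof
  show "range (\<lambda>c. lincomb S c f) \<subseteq> cvs.span (f ` S)"
    using lincomb_in_span[OF assms] by auto
  show "cvs.span (f ` S) \<subseteq> range (\<lambda>c. lincomb S c f)"
  proof (rule cvs.span_minimal[OF _ subspace_lincombs], safe)
    fix l assume l: "l \<in> S"
    have "f l = lincomb S (\<lambda>k. if k = l then 1 else 0) f"
    proof
      fix m
      have "(\<Sum>k\<in>S. (if k = l then 1 else 0) * f k m) = (\<Sum>k\<in>S. if k = l then f l m else 0)"
        by (rule sum.cong) auto
      then show "f l m = lincomb S (\<lambda>k. if k = l then 1 else 0) f m"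
        using l assms by (simp add: lincomb_def)
    qed
    then show "f l \<in> range (\<lambda>c. lincomb S c f)" by (metis rangeI)
  qed
qed

lemma in_span_image_iff: "finite S \<Longrightarrow> y \<in> cvs.span (f ` S) \<longleftrightarrow> (\<exists>c. y = lincomb S c f)"
  using span_image_eq_lincombs[of S f] by auto

lemma Espan_eq: "Espan m = {v. \<forall>k. (k < 1 \<or> m < k) \<longrightarrow> v k = 0}"
proof
  have "cvs.subspace {v :: cvec. \<forall>k. (k < 1 \<or> m < k) \<longrightarrow> v k = 0}"
    by (auto simp: cvs.subspace_def cscale_def)
  then show "Espan m \<subseteq> {v. \<forall>k. (k < 1 \<or> m < k) \<longrightarrow> v k = 0}"
    unfolding Espan_def by (rule cvs.span_minimal[rotated]) (auto simp: e_def)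
  show "{v. \<forall>k. (k < 1 \<or> m < k) \<longrightarrow> v k = 0} \<subseteq> Espan m"
  proof
    fix v :: cvec assume v: "v \<in> {v. \<forall>k. (k < 1 \<or> m < k) \<longrightarrow> v k = 0}"
    have "v = lincomb {1..m} v e"
    proof
      fix k show "v k = lincomb {1..m} v e k"
        using v by (cases "k = 0"; cases "k \<le> m")
          (auto simp: lincomb_def e_def if_distrib sum.delta cong: if_cong)
    qed
    then show "v \<in> Espan m" unfolding Espan_def using lincomb_in_span[of "{1..m}" v e] by simp
  qed
qed

lemma CN_eq_Espan: "CN N = Espan N"
  by (simp add: CN_def Espan_eq)

lemma subspace_CN: "cvs.subspace (CN N)"
  by (simp add: CN_def cvs.subspace_def cscale_def)

lemma e_in_CN: "1 \<le> m \<Longrightarrow> m \<le> N \<Longrightarrow> e m \<in> CN N"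
  by (auto simp: CN_def e_def)

lemma subspace_Espan: "cvs.subspace (Espan m)"
  unfolding Espan_def by (rule cvs.subspace_span)

lemma Espan_mono: "a \<le> b \<Longrightarrow> Espan a \<subseteq> Espan b"
  by (auto simp: Espan_eq)

lemma e_in_Espan: "1 \<le> m \<Longrightarrow> m \<le> q \<Longrightarrow> e m \<in> Espan q"
  by (auto simp: Espan_eq e_def)

lemma Espan_pred_iff:
  assumes "v \<in> Espan m" "1 \<le> m"
  shows "v \<in> Espan (m - 1) \<longleftrightarrow> v m = 0"
proof
  assume vm: "v m = 0"
  show "v \<in> Espan (m - 1)" unfolding Espan_eq mem_Collect_eq
  proof (intro allI impI)
    fix k assume "k < 1 \<or> m - 1 < k"
    then consider "k = m" | "k < 1 \<or> m < k" by linarith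
    then show "v k = 0" using vm assms(1) unfolding Espan_eq by cases blast+
  qed
qed (use assms in \<open>auto simp: Espan_eq\<close>)

lemma independent_e: "cvs.independent (e ` A)"
  unfolding cvs.independent_explicit_finite_subsets
proof (intro allI impI ballI)
  fix B u v assume B: "B \<subseteq> e ` A" "finite B" and sum0: "(\<Sum>v\<in>B. cscale (u v) v) = 0" and v: "v \<in> B"
  obtain a where a: "v = e a" using v B by auto
  have "(\<Sum>w\<in>B. cscale (u w) w) a = (\<Sum>w\<in>B. if w = v then u v else 0)"
    unfolding sum_fun_apply cscale_def
  proof (rule sum.cong)
    fix w assume "w \<in> B"
    then obtain b where b: "w = e b" using B by auto
    then have "w = v \<longleftrightarrow> a = b" using a by (auto simp: e_def fun_eq_iff)
    then show "u w * w a = (if w = v then u v else 0)" using a b by (auto simp: e_def)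
  qed simp
  then show "u v = 0" using sum0 B v by simp
qed

lemma dim_Espan: "cvs.dim (Espan m) = m"
proof -
  have "inj_on e {1..m}" by (auto simp: inj_on_def e_def fun_eq_iff)
  then show ?thesis
    unfolding Espan_def cvs.dim_span cvs.dim_eq_card_independent[OF independent_e]
    by (simp add: card_image)
qed

definition fin_dim :: "cvec set \<Rightarrow> bool" where
  "fin_dim V \<longleftrightarrow> (\<exists>W. finite W \<and> V \<subseteq> cvs.span W)"

lemma fin_dim_Espan: "fin_dim (Espan m)"
  unfolding fin_dim_def Espan_def by blast

lemma fin_dim_subset: "fin_dim B \<Longrightarrow> A \<subseteq> B \<Longrightarrow> fin_dim A"
  unfolding fin_dim_def by blast

lemma fin_dim_basis:
  assumes "fin_dim V"
  obtains B where "finite B" "B \<subseteq> V" "cvs.independent B" "V \<subseteq> cvs.span B" "card B = cvs.dim V"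
proof -
  obtain W where W: "finite W" "V \<subseteq> cvs.span W" using assms fin_dim_def by auto
  obtain B where B: "B \<subseteq> V" "cvs.independent B" "V \<subseteq> cvs.span B" "card B = cvs.dim V"
    using cvs.basis_exists by blast
  have "finite B" using cvs.independent_span_bound[OF W(1) B(2)] B(1) W(2) by auto
  then show ?thesis using B that by auto
qed

lemma dim_mono:
  assumes "fin_dim B" "A \<subseteq> B"
  shows "cvs.dim A \<le> cvs.dim B"
proof -
  obtain C where "finite C" "C \<subseteq> B" "cvs.independent C" "B \<subseteq> cvs.span C" "card C = cvs.dim B"
    by (rule fin_dim_basis[OF assms(1)])
  then show ?thesis using cvs.dim_le_card[of A C] assms(2) by auto
qed

lemma dim_insert_ge:
  assumes "fin_dim A" "a \<notin> cvs.span A"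
  shows "cvs.dim A + 1 \<le> cvs.dim (cvs.span (insert a A))"
proof -
  obtain C where C: "finite C" "C \<subseteq> A" "cvs.independent C" "A \<subseteq> cvs.span C" "card C = cvs.dim A"
    by (rule fin_dim_basis[OF assms(1)])
  have "cvs.span C \<subseteq> cvs.span A" using C(2) by (rule cvs.span_mono)
  then have "a \<notin> cvs.span C" using assms(2) by blast
  then have ind: "cvs.independent (insert a C)" and "a \<notin> C"
    using cvs.independent_insertI[OF _ C(3)] cvs.span_base[of a C] by auto
  obtain W where W: "finite W" "A \<subseteq> cvs.span W" using assms(1) fin_dim_def by auto
  have "cvs.span (insert a A) \<subseteq> cvs.span (insert a W)"
    using W(2) cvs.span_mono[of W "insert a W"] cvs.span_base[of a "insert a W"]
    by (intro cvs.span_minimal[OF _ cvs.subspace_span]) auto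
  then have "fin_dim (cvs.span (insert a A))" using W(1) fin_dim_def by blast
  moreover have "insert a C \<subseteq> cvs.span (insert a A)"
    using C(2) cvs.span_superset[of "insert a A"] by blast
  ultimately have "cvs.dim (insert a C) \<le> cvs.dim (cvs.span (insert a A))"
    by (rule dim_mono)
  then show ?thesis using cvs.dim_eq_card_independent[OF ind] \<open>a \<notin> C\<close> C(1,5) by simp
qed

lemma dim_insert_le:
  assumes "fin_dim A" "V \<subseteq> cvs.span (insert a A)"
  shows "cvs.dim V \<le> cvs.dim A + 1"
proof -
  obtain C where C: "finite C" "C \<subseteq> A" "cvs.independent C" "A \<subseteq> cvs.span C" "card C = cvs.dim A"
    by (rule fin_dim_basis[OF assms(1)])
  have "insert a A \<subseteq> cvs.span (insert a C)"
    using C(4) cvs.span_mono[of C "insert a C"] cvs.span_base[of a "insert a C"] by auto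
  then have "V \<subseteq> cvs.span (insert a C)"
    using assms(2) cvs.span_minimal[OF _ cvs.subspace_span] by (meson order_trans)
  then have "cvs.dim V \<le> card (insert a C)" using C(1) by (intro cvs.dim_le_card) auto
  then show ?thesis using C(1,5) by (simp add: card_insert_if split: if_splits)
qed

lemma subspace_eq_of_dim_le:
  assumes "fin_dim B" "A \<subseteq> B" "cvs.subspace A" "cvs.dim B \<le> cvs.dim A"
  shows "A = B"
proof (rule ccontr)
  assume "A \<noteq> B"
  then obtain b where b: "b \<in> B" "b \<notin> A" using assms(2) by auto
  obtain C where C: "finite C" "C \<subseteq> A" "cvs.independent C" "A \<subseteq> cvs.span C" "card C = cvs.dim A"
    by (rule fin_dim_basis[OF fin_dim_subset[OF assms(1,2)]])
  have "cvs.span C \<subseteq> A" using C(2) assms(3) by (simp add: cvs.span_minimal)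
  then have "b \<notin> cvs.span C" using b by auto
  then have ind: "cvs.independent (insert b C)" and "b \<notin> C"
    using C(3) cvs.independent_insertI cvs.span_base by blast+
  have "insert b C \<subseteq> B" using b(1) C(2) assms(2) by blast
  from dim_mono[OF assms(1) this] have "card (insert b C) \<le> cvs.dim B"
    using cvs.dim_eq_card_independent[OF ind] by simp
  moreover have "card (insert b C) = card C + 1" using C(1) \<open>b \<notin> C\<close> by simp
  ultimately show False using C(5) assms(4) by linarith
qed

lemma dim_zero_imp_eq_0:
  assumes "fin_dim V" "cvs.subspace V" "cvs.dim V = 0"
  shows "V = {0}"
proof -
  obtain B where "finite B" "B \<subseteq> V" "cvs.independent B" "V \<subseteq> cvs.span B" "card B = cvs.dim V"
    by (rule fin_dim_basis[OF assms(1)])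
  then have "V \<subseteq> {0}" using assms(3) by (simp add: cvs.span_empty)
  then show ?thesis using cvs.subspace_0[OF assms(2)] by auto
qed

lemma dim_le_Suc_dim_inter_Espan_pred:
  assumes A: "cvs.subspace A" "A \<subseteq> Espan m"
  shows "cvs.dim A \<le> cvs.dim (A \<inter> Espan (m - 1)) + 1"
proof (cases "A \<subseteq> Espan (m - 1)")
  case True
  then show ?thesis by (simp add: Int_absorb2)
next
  case False
  then obtain a0 where a0: "a0 \<in> A" "a0 \<notin> Espan (m - 1)" by auto
  have "1 \<le> m" using a0 A(2) by (cases m) auto
  then have nz: "a0 m \<noteq> 0" using Espan_pred_iff a0 A(2) by blast
  \<comment> \<open>Gaussian elimination of the \<open>m\<close>-th coordinate against \<open>a0\<close>.\<close>
  have "A \<subseteq> cvs.span (insert a0 (A \<inter> Espan (m - 1)))"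
  proof
    fix a assume a: "a \<in> A"
    define a' where "a' = a - cscale (a m / a0 m) a0"
    have "a' \<in> A" using a a0 A(1) by (simp add: a'_def cvs.subspace_diff cvs.subspace_scale)
    moreover have "a' \<in> Espan m" using a a0(1) A(2) unfolding a'_def
      by (blast intro: cvs.subspace_diff cvs.subspace_scale subspace_Espan)
    moreover have "a' m = 0" using nz by (simp add: a'_def cscale_def)
    ultimately have "a' \<in> A \<inter> Espan (m - 1)" using Espan_pred_iff \<open>1 \<le> m\<close> by blast
    then have "a' + cscale (a m / a0 m) a0 \<in> cvs.span (insert a0 (A \<inter> Espan (m - 1)))"
      by (intro cvs.span_add cvs.span_scale cvs.span_base) auto
    then show "a \<in> cvs.span (insert a0 (A \<inter> Espan (m - 1)))" by (simp add: a'_def)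
  qed
  moreover have "fin_dim (A \<inter> Espan (m - 1))" using fin_dim_Espan fin_dim_subset by blast
  ultimately show ?thesis using dim_insert_le by blast
qed

lemma dim_inter_Espan_transversal:
  assumes S: "cvs.subspace S" "S \<subseteq> Espan q" "cvs.dim S = r" "r \<le> q" "S \<inter> Espan (q - r) \<subseteq> {0}"
  shows "cvs.dim (S \<inter> Espan m) = min r (r + m - q)"
proof -
  define d where "d k = cvs.dim (S \<inter> Espan k)" for k
  have step: "d k \<le> d (k - 1) + 1" for k
  proof -
    have "cvs.subspace (S \<inter> Espan k)" using S(1) subspace_Espan by (rule cvs.subspace_inter)
    moreover have "S \<inter> Espan k \<inter> Espan (k - 1) = S \<inter> Espan (k - 1)"
      using Espan_mono[of "k - 1" k] by auto
    ultimately show ?thesis unfolding d_def using dim_le_Suc_dim_inter_Espan_pred by fastforce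
  qed
  have mono: "d k \<le> d k'" if "k \<le> k'" for k k'
    unfolding d_def using Espan_mono[OF that] fin_dim_Espan fin_dim_subset
    by (intro dim_mono) blast+
  have dq: "d q = r" using S(2,3) by (simp add: d_def Int_absorb2)
  have d0: "d (q - r) = 0"
  proof -
    have "S \<inter> Espan (q - r) = {0}"
      using S(1,5) cvs.subspace_0 subspace_Espan by blast
    then show ?thesis using cvs.dim_le_card[of "{0}" "{}"] by (simp add: d_def cvs.span_empty)
  qed
  have up: "d (q - r + k) \<le> k" for k
  proof (induct k)
    case (Suc k)
    then show ?case using step[of "Suc (q - r + k)"] by simp
  qed (simp add: d0)
  have down: "r \<le> d (q - j) + j" if "j \<le> q" for j
    using that
  proof (induct j)
    case (Suc j)
    then have "r \<le> d (q - j) + j" by simp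
    moreover have "d (q - j) \<le> d (q - Suc j) + 1" using step[of "q - j"] by simp
    ultimately show ?case by linarith
  qed (simp add: dq)
  show ?thesis
  proof (cases "q \<le> m")
    case True
    then have "S \<inter> Espan m = S" using S(2) Espan_mono[OF True] by auto
    then show ?thesis using S(3) True by simp
  next
    case False
    have "d m = (if m \<le> q - r then 0 else r + m - q)"
    proof (cases "m \<le> q - r")
      case True
      then show ?thesis using mono[OF True] d0 by simp
    next
      case False2: False
      have "d m \<le> m - (q - r)" using up[of "m - (q - r)"] False2 by simp
      moreover have "r \<le> d m + (q - m)" using down[of "q - m"] False by simp
      ultimately show ?thesis using False False2 S(4) by simp
    qed
    then show ?thesis using False S(4) unfolding d_def by auto
  qed
qed

section \<open>Independent families and limits of spans\<close>

definition indep_family :: "'a set \<Rightarrow> ('a \<Rightarrow> cvec) \<Rightarrow> bool" where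
  "indep_family S f \<longleftrightarrow> (\<forall>c. lincomb S c f = 0 \<longrightarrow> (\<forall>l\<in>S. c l = 0))"

lemma indep_family_inj_on:
  assumes "finite S" "indep_family S f"
  shows "inj_on f S"
proof (rule inj_onI, rule ccontr)
  fix a b assume ab: "a \<in> S" "b \<in> S" "f a = f b" "a \<noteq> b"
  define c where "c = (\<lambda>l. if l = a then (1::complex) else if l = b then -1 else 0)"
  have "lincomb S c f = 0"
  proof
    fix m
    have "(\<Sum>l\<in>S. c l * f l m)
        = (\<Sum>l\<in>S. (if l = a then f a m else 0) + (if l = b then - f b m else 0))"
      by (rule sum.cong) (use ab(4) in \<open>auto simp: c_def\<close>)
    also have "\<dots> = 0" using ab assms(1) by (simp add: sum.distrib)
    finally show "lincomb S c f m = 0 m" by (simp add: lincomb_def)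
  qed
  then have "c a = 0" using assms(2) ab(1) unfolding indep_family_def by blast
  then show False by (simp add: c_def)
qed

lemma sum_image_cscale_eq_lincomb:
  assumes "inj_on f S"
  shows "(\<Sum>x\<in>f ` S. cscale (g x) x) = lincomb S (\<lambda>l. g (f l)) f"
  unfolding sum_cscale_eq_lincomb[symmetric] using sum.reindex[OF assms] by simp

lemma independent_image_of_indep_family:
  assumes "finite S" "indep_family S f"
  shows "cvs.independent (f ` S)"
proof (rule cvs.independent_if_scalars_zero)
  show "finite (f ` S)" using assms by simp
  fix g x assume "(\<Sum>x\<in>f ` S. cscale (g x) x) = 0" "x \<in> f ` S"
  then show "g x = 0"
    using sum_image_cscale_eq_lincomb[OF indep_family_inj_on[OF assms], of g] assms(2)
    by (auto simp: indep_family_def)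
qed

lemma dim_span_indep_family:
  assumes "finite S" "indep_family S f"
  shows "cvs.dim (cvs.span (f ` S)) = card S"
  using cvs.dim_span_eq_card_independent[OF independent_image_of_indep_family[OF assms]]
    card_image[OF indep_family_inj_on[OF assms]] by simp

lemma indep_family_of_dim_span:
  assumes "finite S" "cvs.dim (cvs.span (f ` S)) = card S"
  shows "indep_family S f"
proof -
  obtain B where B: "B \<subseteq> f ` S" "cvs.independent B" "f ` S \<subseteq> cvs.span B" "card B = cvs.dim (f ` S)"
    using cvs.basis_exists by blast
  have "card (f ` S) \<le> card S" using assms(1) card_image_le by blast
  moreover have "card B = card S" using B(4) assms(2) by simp
  ultimately have "B = f ` S" using card_seteq[OF finite_imageI[OF assms(1)] B(1)] by simp
  then have indep: "cvs.independent (f ` S)" and inj: "inj_on f S"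
    using B(2) \<open>card B = card S\<close> assms(1) eq_card_imp_inj_on by auto
  show ?thesis unfolding indep_family_def
  proof (intro allI impI ballI)
    fix c l assume c: "lincomb S c f = 0" and l: "l \<in> S"
    let ?g = "\<lambda>x. c (the_inv_into S f x)"
    have "(\<Sum>x\<in>f ` S. cscale (?g x) x) = lincomb S c f"
      unfolding sum_image_cscale_eq_lincomb[OF inj] lincomb_def
      using the_inv_into_f_f[OF inj] by (intro ext sum.cong) simp_all
    moreover have H: "\<forall>Sa\<subseteq>f ` S. finite Sa \<longrightarrow>
        (\<forall>u. (\<Sum>v\<in>Sa. cscale (u v) v) = 0 \<longrightarrow> (\<forall>v\<in>Sa. u v = 0))"
      using indep by (simp only: cvs.independent_explicit_finite_subsets)
    ultimately have "?g (f l) = 0"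
      using H[rule_format, OF order_refl finite_imageI[OF assms(1)], of ?g "f l"] c l by simp
    then show "c l = 0" using the_inv_into_f_f[OF inj l] by simp
  qed
qed

lemma indep_family_subset:
  assumes "finite S" "T \<subseteq> S" "indep_family S f"
  shows "indep_family T f"
  unfolding indep_family_def
proof (intro allI impI ballI)
  fix c l assume c: "lincomb T c f = 0" and l: "l \<in> T"
  let ?c = "\<lambda>k. if k \<in> T then c k else 0"
  have "lincomb S ?c f = lincomb T c f"
  proof
    fix m
    have "(\<Sum>l\<in>S. ?c l * f l m) = (\<Sum>l\<in>S \<inter> T. c l * f l m)"
      using assms(1) by (simp add: sum.inter_restrict if_distrib[of "\<lambda>x. x * _"] cong: if_cong)
    then show "lincomb S ?c f m = lincomb T c f m"
      using assms(2) by (simp add: lincomb_def Int_absorb1)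
  qed
  then have "\<forall>k\<in>S. ?c k = 0" using c assms(3)[unfolded indep_family_def, rule_format, of ?c] by simp
  then have "?c l = 0" using l assms(2) by blast
  then show "c l = 0" using l by simp
qed

definition eliminate :: "nat \<Rightarrow> cvec \<Rightarrow> cvec \<Rightarrow> cvec" where
  "eliminate m0 w v = v - cscale (v m0 / w m0) w"

lemma eliminate_apply: "eliminate m0 w v m = v m - v m0 / w m0 * w m"
  by (simp add: eliminate_def cscale_def)

lemma lincomb_fun_upd_notin: "l0 \<notin> S \<Longrightarrow> lincomb S (c(l0 := x)) f = lincomb S c f"
  by (auto simp: lincomb_def intro!: sum.cong ext)

lemma eliminate_lincomb_commute:
  "eliminate m0 w (lincomb S c u) = lincomb S c (\<lambda>l. eliminate m0 w (u l))"
proof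
  fix m
  have "(\<Sum>l\<in>S. c l * (u l m - u l m0 / w m0 * w m))
      = (\<Sum>l\<in>S. c l * u l m - c l * u l m0 * (w m / w m0))"
    by (rule sum.cong) (auto simp: algebra_simps)
  then show "eliminate m0 w (lincomb S c u) m = lincomb S c (\<lambda>l. eliminate m0 w (u l)) m"
    by (simp add: eliminate_apply lincomb_apply sum_subtractf sum_distrib_right sum_divide_distrib)
qed

lemma eliminate_self: "w m0 \<noteq> 0 \<Longrightarrow> eliminate m0 w w = 0"
  by (simp add: eliminate_def cscale_def fun_eq_iff)

lemma lincomb_eliminate:
  assumes "finite S" "l0 \<notin> S"
  shows "lincomb S c (\<lambda>l. eliminate m0 (u l0) (u l))
    = lincomb (insert l0 S) (c(l0 := - lincomb S c u m0 / u l0 m0)) u"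
  unfolding eliminate_lincomb_commute[symmetric]
  using assms by (auto simp: fun_eq_iff eliminate_apply lincomb_insert lincomb_fun_upd_notin)

lemma eliminate_lincomb_insert:
  assumes "finite S" "l0 \<notin> S" "u l0 m0 \<noteq> 0"
  shows "eliminate m0 (u l0) (lincomb (insert l0 S) c u) = lincomb S c (\<lambda>l. eliminate m0 (u l0) (u l))"
  unfolding eliminate_lincomb_commute
  using assms by (auto simp: fun_eq_iff lincomb_insert eliminate_self)

lemma tendsto_eliminate:
  assumes "\<forall>m. (\<lambda>k. W k m) \<longlonglongrightarrow> w m" "\<forall>m. (\<lambda>k. V k m) \<longlonglongrightarrow> v m" "w m0 \<noteq> 0"
  shows "(\<lambda>k. eliminate m0 (W k) (V k) m) \<longlonglongrightarrow> eliminate m0 w v m"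
  unfolding eliminate_apply using assms by (intro tendsto_intros) auto

text \<open>Induction on the frame, eliminating a coordinate at which the first limit vector is nonzero.\<close>

lemma lincomb_of_limit:
  fixes U :: "nat \<Rightarrow> 'a \<Rightarrow> cvec" and u :: "'a \<Rightarrow> cvec"
  assumes "finite S" "\<forall>l\<in>S. \<forall>m. (\<lambda>k. U k l m) \<longlonglongrightarrow> u l m" "\<forall>m. (\<lambda>k. b k m) \<longlonglongrightarrow> b0 m"
    "eventually (\<lambda>k. \<exists>c. b k = lincomb S c (U k)) sequentially" "indep_family S u"
  shows "\<exists>c. b0 = lincomb S c u"
  using assms
proof (induct S arbitrary: U u b b0 rule: finite_induct)
  case empty
  have "b0 = 0"
  proof
    fix m
    have "eventually (\<lambda>k. b k m = 0) sequentially"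
      using empty(3) by eventually_elim (auto simp: lincomb_empty)
    then have "(\<lambda>k. b k m) \<longlonglongrightarrow> 0" by (rule tendsto_eventually)
    then show "b0 m = 0 m" using empty(2) LIMSEQ_unique by fastforce
  qed
  then show ?case by (auto simp: lincomb_empty)
next
  case (insert l0 S)
  have "lincomb (insert l0 S) (\<lambda>l. if l = l0 then 1 else 0) u = u l0"
    using insert(1,2) by (auto simp: lincomb_def fun_eq_iff intro!: sum.neutral)
  then have "u l0 \<noteq> 0" using insert(7) unfolding indep_family_def by force
  then obtain m0 where m0: "u l0 m0 \<noteq> 0" by (auto simp: fun_eq_iff)
  have ev0: "eventually (\<lambda>k. U k l0 m0 \<noteq> 0) sequentially"
    using insert(4) m0 by (intro tendsto_imp_eventually_ne) auto
  define U' where "U' k = (\<lambda>l. eliminate m0 (U k l0) (U k l))" for k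
  define u' where "u' = (\<lambda>l. eliminate m0 (u l0) (u l))"
  have "\<exists>c. eliminate m0 (u l0) b0 = lincomb S c u'"
  proof (rule insert(3))
    show "\<forall>l\<in>S. \<forall>m. (\<lambda>k. U' k l m) \<longlonglongrightarrow> u' l m"
      using insert(4) m0 by (auto simp: U'_def u'_def intro!: tendsto_eliminate)
    show "\<forall>m. (\<lambda>k. eliminate m0 (U k l0) (b k) m) \<longlonglongrightarrow> eliminate m0 (u l0) b0 m"
      using insert(4,5) m0 by (auto intro!: tendsto_eliminate)
    show "\<forall>\<^sub>F k in sequentially. \<exists>c. eliminate m0 (U k l0) (b k) = lincomb S c (U' k)"
      using insert(6) ev0
      by eventually_elim (auto simp: U'_def eliminate_lincomb_insert[OF insert(1,2)])
    show "indep_family S u'"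
      unfolding indep_family_def
    proof (intro allI impI ballI)
      fix c l assume "lincomb S c u' = 0" "l \<in> S"
      then show "c l = 0"
        using insert(2,7) unfolding u'_def lincomb_eliminate[OF insert(1,2)] indep_family_def
        by (metis fun_upd_other insertCI)
    qed
  qed
  then obtain c where c: "eliminate m0 (u l0) b0 = lincomb S c u'" by blast
  define c' where "c' = c(l0 := - lincomb S c u m0 / u l0 m0 + b0 m0 / u l0 m0)"
  have "b0 = lincomb (insert l0 S) c' u"
  proof
    fix m
    have "b0 m = eliminate m0 (u l0) b0 m + b0 m0 / u l0 m0 * u l0 m" by (simp add: eliminate_apply)
    also have "\<dots> = lincomb (insert l0 S) c' u m"
      using c insert(1,2) unfolding u'_def lincomb_eliminate[OF insert(1,2)] c'_def
      by (simp add: lincomb_insert lincomb_fun_upd_notin algebra_simps)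
    finally show "b0 m = lincomb (insert l0 S) c' u m" .
  qed
  then show ?case by blast
qed

section \<open>Generic transversality\<close>

lemma indep_family_eigenvectors:
  fixes M :: "nat \<Rightarrow> nat \<Rightarrow> complex"
  assumes "finite K"
    and eig: "\<And>t m. t \<in> K \<Longrightarrow> m \<in> J \<Longrightarrow> (\<Sum>m'\<in>J. M m m' * v t m') = - t * v t m"
    and supp: "\<And>t m. m \<notin> J \<Longrightarrow> v t m = 0"
    and nz: "\<And>t. t \<in> K \<Longrightarrow> v t \<noteq> 0"
  shows "indep_family K v"
  using assms(1) eig nz
proof (induct K rule: finite_induct)
  case empty
  then show ?case by (simp add: indep_family_def)
next
  case (insert t0 K)
  show ?case unfolding indep_family_def
  proof (intro allI impI)
    fix c assume c: "lincomb (insert t0 K) c v = 0"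
    \<comment> \<open>apply \<open>M + t0\<close> to the relation: the \<open>t0\<close>-term disappears\<close>
    have "lincomb K (\<lambda>s. c s * (t0 - s)) v = 0"
    proof
      fix m
      show "lincomb K (\<lambda>s. c s * (t0 - s)) v m = 0 m"
      proof (cases "m \<in> J")
        case False
        then show ?thesis by (simp add: lincomb_def supp)
      next
        case True
        have "0 = (\<Sum>m'\<in>J. M m m' * lincomb (insert t0 K) c v m') + t0 * lincomb (insert t0 K) c v m"
          using c by simp
        also have "\<dots> = (\<Sum>s\<in>insert t0 K. c s * ((\<Sum>m'\<in>J. M m m' * v s m') + t0 * v s m))"
          by (simp add: lincomb_def sum_distrib_left sum_distrib_right sum.distrib algebra_simps
              sum.swap[of _ J])
        also have "\<dots> = (\<Sum>s\<in>insert t0 K. c s * ((t0 - s) * v s m))"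
          using insert(4) True by (intro sum.cong) (auto simp: algebra_simps)
        also have "\<dots> = lincomb K (\<lambda>s. c s * (t0 - s)) v m"
          using insert(1,2) by (simp add: lincomb_def algebra_simps)
        finally show ?thesis by simp
      qed
    qed
    moreover have "indep_family K v" using insert(3-5) by blast
    ultimately have "\<forall>s\<in>K. c s * (t0 - s) = 0"
      unfolding indep_family_def by blast
    then have cK: "\<forall>s\<in>K. c s = 0" using insert(2) by auto
    then have "cscale (c t0) (v t0) = 0"
      using c lincomb_insert[OF insert(1,2), of c v] lincomb_zero_coeffs[OF cK, of v]
      by (auto simp: fun_eq_iff cscale_def)
    then have "c t0 = 0" using insert(5) by (auto simp: cscale_def fun_eq_iff)
    then show "\<forall>l\<in>insert t0 K. c l = 0" using cK by auto
  qed
qed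

text \<open>Eigenvectors for distinct eigenvalues are independent, and at most \<open>card J\<close> of them fit into
  \<open>span (e ` J)\<close>.\<close>

lemma finite_eigenvalues:
  fixes M :: "nat \<Rightarrow> nat \<Rightarrow> complex"
  assumes J: "finite J"
  shows "finite {t. \<exists>d. (\<exists>m\<in>J. d m \<noteq> 0) \<and> (\<forall>m\<in>J. (\<Sum>m'\<in>J. M m m' * d m') + t * d m = 0)}"
    (is "finite ?T")
proof (rule ccontr)
  assume inf: "infinite ?T"
  have "\<forall>t\<in>?T. \<exists>d. (\<exists>m\<in>J. d m \<noteq> 0) \<and> (\<forall>m\<in>J. (\<Sum>m'\<in>J. M m m' * d m') + t * d m = 0)"
    by simp
  from bchoice[OF this] obtain d where d: "\<forall>t\<in>?T.
      (\<exists>m\<in>J. d t m \<noteq> 0) \<and> (\<forall>m\<in>J. (\<Sum>m'\<in>J. M m m' * d t m') + t * d t m = 0)"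
    by blast
  define v where "v t = (\<lambda>m. if m \<in> J then d t m else 0)" for t
  obtain K where K: "K \<subseteq> ?T" "finite K" "card K = Suc (card J)"
    using infinite_arbitrarily_large[OF inf] by blast
  have "indep_family K v"
  proof (rule indep_family_eigenvectors[OF K(2)])
    fix t m assume t: "t \<in> K" and m: "m \<in> J"
    have "(\<Sum>m'\<in>J. M m m' * v t m') = (\<Sum>m'\<in>J. M m m' * d t m')"
      by (rule sum.cong) (auto simp: v_def)
    moreover have "(\<Sum>m'\<in>J. M m m' * d t m') + t * d t m = 0" using d t m K(1) by blast
    ultimately show "(\<Sum>m'\<in>J. M m m' * v t m') = - t * v t m"
      using m by (simp add: v_def add_eq_0_iff)
  next
    fix t assume "t \<in> K"
    then obtain m where "m \<in> J" "d t m \<noteq> 0" using d K(1) by blast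
    then show "v t \<noteq> 0" by (auto simp: v_def fun_eq_iff)
  qed (simp add: v_def)
  then have "cvs.dim (cvs.span (v ` K)) = card K" using dim_span_indep_family[OF K(2)] by blast
  moreover have "v ` K \<subseteq> cvs.span (e ` J)"
  proof
    fix w assume "w \<in> v ` K"
    then have w0: "w m = 0" if "m \<notin> J" for m using that by (auto simp: v_def)
    have "w = lincomb J w e"
    proof
      fix m
      have "lincomb J w e m = (\<Sum>l\<in>J. if l = m then w m else 0)"
        unfolding lincomb_def by (rule sum.cong) (auto simp: e_def)
      then show "w m = lincomb J w e m" using J w0 by (cases "m \<in> J") auto
    qed
    then show "w \<in> cvs.span (e ` J)" using lincomb_in_span[OF J, of w e] by simp
  qed
  then have "cvs.span (v ` K) \<subseteq> cvs.span (e ` J)"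
    by (rule cvs.span_minimal[OF _ cvs.subspace_span])
  then have "cvs.dim (cvs.span (v ` K)) \<le> card (e ` J)"
    using cvs.dim_le_card finite_imageI[OF J] by blast
  moreover have "card (e ` J) \<le> card J" using J card_image_le by blast
  ultimately show False using K(3) by simp
qed

definition indep_mod_Espan :: "nat \<Rightarrow> 'a set \<Rightarrow> ('a \<Rightarrow> cvec) \<Rightarrow> bool" where
  "indep_mod_Espan k S f \<longleftrightarrow> (\<forall>c. lincomb S c f \<in> Espan k \<longrightarrow> (\<forall>l\<in>S. c l = 0))"

lemma indep_family_of_indep_mod_Espan: "indep_mod_Espan k S f \<Longrightarrow> indep_family S f"
  using cvs.subspace_0[OF subspace_Espan] by (auto simp: indep_mod_Espan_def indep_family_def)

lemma span_inter_Espan_trivial: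
  assumes "finite S" "indep_mod_Espan k S f"
  shows "cvs.span (f ` S) \<inter> Espan k \<subseteq> {0}"
proof
  fix y assume y: "y \<in> cvs.span (f ` S) \<inter> Espan k"
  then obtain c where c: "y = lincomb S c f" using in_span_image_iff[OF assms(1)] by auto
  then have "\<forall>l\<in>S. c l = 0" using y assms(2) by (auto simp: indep_mod_Espan_def)
  then show "y \<in> {0}" using c lincomb_zero_coeffs by auto
qed

text \<open>A failure at \<open>t\<close> yields an eigenvector, with eigenvalue \<open>-t\<close>, of the matrix formed by the
  coordinates \<open>k+1..q\<close> of \<open>a\<close>, with columns reindexed by \<open>\<sigma>\<close>.\<close>

lemma finite_not_indep_mod_Espan:
  fixes a :: "nat \<Rightarrow> cvec"
  assumes S: "finite S" and inj: "inj_on \<sigma> S" and im: "\<sigma> ` S = {k + 1..q}"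
  shows "finite {t. \<not> indep_mod_Espan k S (\<lambda>l. a l + cscale t (e (\<sigma> l)))}"
proof -
  let ?J = "{k + 1..q}"
  define \<tau> where "\<tau> = the_inv_into S \<sigma>"
  have \<tau>\<sigma>: "\<tau> (\<sigma> l) = l" if "l \<in> S" for l using the_inv_into_f_f[OF inj that] by (simp add: \<tau>_def)
  have \<sigma>\<tau>: "\<sigma> (\<tau> m) = m" "\<tau> m \<in> S" if "m \<in> ?J" for m
    using f_the_inv_into_f[OF inj, of m] the_inv_into_into[OF inj, of m S] that im by (auto simp: \<tau>_def)
  define M where "M m m' = a (\<tau> m') m" for m m'
  let ?T = "{t. \<exists>d. (\<exists>m\<in>?J. d m \<noteq> 0) \<and> (\<forall>m\<in>?J. (\<Sum>m'\<in>?J. M m m' * d m') + t * d m = 0)}"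
  have "{t. \<not> indep_mod_Espan k S (\<lambda>l. a l + cscale t (e (\<sigma> l)))} \<subseteq> ?T"
  proof
    fix t assume "t \<in> {t. \<not> indep_mod_Espan k S (\<lambda>l. a l + cscale t (e (\<sigma> l)))}"
    then obtain c l0 where c: "lincomb S c (\<lambda>l. a l + cscale t (e (\<sigma> l))) \<in> Espan k"
      and l0: "l0 \<in> S" "c l0 \<noteq> 0"
      by (auto simp: indep_mod_Espan_def)
    define d where "d m = c (\<tau> m)" for m
    have "\<exists>m\<in>?J. d m \<noteq> 0" using l0 \<tau>\<sigma> im by (auto simp: d_def intro!: bexI[of _ "\<sigma> l0"])
    moreover have "(\<Sum>m'\<in>?J. M m m' * d m') + t * d m = 0" if m: "m \<in> ?J" for m
    proof -
      have "(\<Sum>l\<in>S. c l * t * e (\<sigma> l) m) = (\<Sum>l\<in>S. if l = \<tau> m then c l * t else 0)"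
      proof (rule sum.cong)
        fix l assume l: "l \<in> S"
        have "\<sigma> l = m \<longleftrightarrow> l = \<tau> m" using \<tau>\<sigma>[OF l] \<sigma>\<tau>[OF m] by auto
        then show "c l * t * e (\<sigma> l) m = (if l = \<tau> m then c l * t else 0)" by (auto simp: e_def)
      qed simp
      then have "(\<Sum>l\<in>S. c l * t * e (\<sigma> l) m) = t * d m"
        using S \<sigma>\<tau>(2)[OF m] by (simp add: d_def)
      moreover have "(\<Sum>m'\<in>?J. M m m' * d m') = (\<Sum>l\<in>S. c l * a l m)"
        unfolding im[symmetric] sum.reindex[OF inj] by (rule sum.cong) (auto simp: M_def d_def \<tau>\<sigma>)
      moreover have "lincomb S c (\<lambda>l. a l + cscale t (e (\<sigma> l))) m = 0"
        using c m by (auto simp: Espan_eq)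
      ultimately show ?thesis
        by (simp add: lincomb_def cscale_def sum.distrib algebra_simps)
    qed
    ultimately show "t \<in> ?T" by blast
  qed
  moreover have "finite ?T" by (rule finite_eigenvalues) simp
  ultimately show ?thesis by (rule finite_subset)
qed

section \<open>Flags, the nilpotent map and the Schubert cell\<close>

lemma flag_of_eq_span: "j \<le> n \<Longrightarrow> flag_of n u j = cvs.span (u ` {1..j})"
  by (simp add: flag_of_def)

lemma
  assumes "V \<in> Fl N n" "j \<le> n"
  shows Fl_subspace: "cvs.subspace (V j)" and Fl_subset_CN: "V j \<subseteq> CN N"
    and Fl_dim: "cvs.dim (V j) = j" and Fl_fin_dim: "fin_dim (V j)"
proof -
  show "cvs.subspace (V j)" "V j \<subseteq> CN N" "cvs.dim (V j) = j"
    using assms unfolding Fl_def by blast+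
  then show "fin_dim (V j)" using fin_dim_subset[OF fin_dim_Espan] by (simp add: CN_eq_Espan)
qed

lemma Fl_mono:
  assumes "V \<in> Fl N n" "j \<le> k" "k \<le> n"
  shows "V j \<subseteq> V k"
  using assms(2,3)
proof (induct k)
  case (Suc k)
  show ?case
  proof (cases "j = Suc k")
    case False
    then have "V j \<subseteq> V k" using Suc by simp
    also have "V k \<subseteq> V (Suc k)" using assms(1) Suc(3) unfolding Fl_def by simp
    finally show ?thesis .
  qed simp
qed simp

lemma flag_of_in_Fl:
  assumes "\<forall>l\<in>{1..n}. u l \<in> CN N" "indep_family {1..n} u"
  shows "flag_of n u \<in> Fl N n"
  unfolding Fl_def mem_Collect_eq
proof (intro conjI allI impI)
  fix j assume j: "j \<le> n"
  show "cvs.subspace (flag_of n u j)" unfolding flag_of_eq_span[OF j] by (rule cvs.subspace_span)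
  show "flag_of n u j \<subseteq> CN N" unfolding flag_of_eq_span[OF j] CN_eq_Espan
    using assms(1) j by (intro cvs.span_minimal subspace_Espan) (auto simp: CN_eq_Espan)
  have "indep_family {1..j} u" using indep_family_subset[of "{1..n}" "{1..j}" u] assms(2) j by auto
  then show "cvs.dim (flag_of n u j) = j" unfolding flag_of_eq_span[OF j]
    using dim_span_indep_family[of "{1..j}" u] by simp
next
  fix j assume "j < n"
  then show "flag_of n u j \<subseteq> flag_of n u (Suc j)"
    by (simp add: flag_of_eq_span cvs.span_mono image_mono)
qed (simp add: flag_of_def)

lemma
  assumes "flag_of n u \<in> Fl N n"
  shows indep_family_of_flag_of: "indep_family {1..n} u"
    and frame_in_CN_of_flag_of: "\<forall>l\<in>{1..n}. u l \<in> CN N"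
proof -
  show "indep_family {1..n} u"
    using Fl_dim[OF assms order_refl] by (intro indep_family_of_dim_span) (auto simp: flag_of_eq_span)
  show "\<forall>l\<in>{1..n}. u l \<in> CN N"
    using Fl_subset_CN[OF assms order_refl] cvs.span_base[of _ "u ` {1..n}"] by (auto simp: flag_of_eq_span)
qed

lemma flag_of_adapted_frame:
  assumes V: "V \<in> Fl N n" and u: "\<forall>j\<in>{1..n}. u j \<in> V j \<and> u j \<notin> V (j - 1)"
  shows "flag_of n u = V"
proof
  fix j
  show "flag_of n u j = V j"
  proof (cases "j \<le> n")
    case False
    then show ?thesis using V by (simp add: flag_of_def Fl_def)
  next
    case True
    then show ?thesis
    proof (induct j)
      case 0
      have "V 0 = {0}" using Fl_fin_dim Fl_subspace Fl_dim V by (intro dim_zero_imp_eq_0) auto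
      then show ?case by (simp add: flag_of_def cvs.span_empty)
    next
      case (Suc j)
      have IH: "cvs.span (u ` {1..j}) = V j" using Suc by (simp add: flag_of_eq_span)
      have ins: "u ` {1..Suc j} = insert (u (Suc j)) (u ` {1..j})"
        by (auto simp: le_Suc_eq intro!: imageI[of "Suc j"])
      have "Suc j \<in> {1..n}" using Suc(2) by simp
      then have "u (Suc j) \<in> V (Suc j) \<and> u (Suc j) \<notin> V (Suc j - 1)" using u by blast
      then have uj: "u (Suc j) \<in> V (Suc j)" "u (Suc j) \<notin> V j" by auto
      have "u ` {1..j} \<subseteq> V (Suc j)"
        using IH cvs.span_superset[of "u ` {1..j}"] Fl_mono[OF V, of j "Suc j"] Suc(2) by auto
      then have sub: "cvs.span (u ` {1..Suc j}) \<subseteq> V (Suc j)"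
        unfolding ins using uj(1) by (intro cvs.span_minimal Fl_subspace[OF V Suc(2)]) auto
      have "fin_dim (u ` {1..j})"
        unfolding fin_dim_def by (intro exI[of _ "u ` {1..j}"]) (simp add: cvs.span_superset)
      then have "cvs.dim (u ` {1..j}) + 1 \<le> cvs.dim (cvs.span (u ` {1..Suc j}))"
        unfolding ins using uj(2) IH by (intro dim_insert_ge) simp_all
      moreover have "cvs.dim (u ` {1..j}) = j"
        using Fl_dim[OF V, of j] Suc(2) IH cvs.dim_span[of "u ` {1..j}"] by simp
      ultimately have "cvs.span (u ` {1..Suc j}) = V (Suc j)"
        using Fl_dim[OF V Suc(2)]
        by (intro subspace_eq_of_dim_le[OF Fl_fin_dim[OF V Suc(2)] sub cvs.subspace_span]) simp
      then show ?case using Suc(2) by (simp add: flag_of_eq_span)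
    qed
  qed
qed

definition xlift :: "nat \<Rightarrow> cvec \<Rightarrow> cvec" where
  "xlift n y = (\<lambda>k. if n \<le> k \<and> k \<le> 2 * (n - 1) then y (k - (n - 1)) else 0)"

lemma xmap_add: "xmap n (a + b) = xmap n a + xmap n b"
  by (auto simp: xmap_def fun_eq_iff)

lemma xmap_diff: "xmap n (a - b) = xmap n a - xmap n b"
  by (auto simp: xmap_def fun_eq_iff)

lemma xmap_scale: "xmap n (cscale c a) = cscale c (xmap n a)"
  by (auto simp: xmap_def fun_eq_iff cscale_def)

lemma xmap_zero: "xmap n 0 = 0"
  by (auto simp: xmap_def fun_eq_iff)

lemma xmap_lincomb: "xmap n (lincomb S c f) = lincomb S c (\<lambda>l. xmap n (f l))"
  by (auto simp: xmap_def fun_eq_iff lincomb_def)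

lemma xmap_in_Espan: "xmap n v \<in> Espan (n - 1)"
  by (auto simp: xmap_def Espan_eq)

lemma xmap_Espan: "v \<in> Espan (n - 1) \<Longrightarrow> xmap n v = 0"
  by (auto simp: xmap_def Espan_eq fun_eq_iff)

lemma xmap_xlift: "y \<in> Espan (n - 1) \<Longrightarrow> xmap n (xlift n y) = y"
  by (auto simp: xmap_def xlift_def Espan_eq fun_eq_iff not_le)

lemma xlift_in_CN: "1 \<le> n \<Longrightarrow> 2 * (n - 1) \<le> N \<Longrightarrow> xlift n y \<in> CN N"
  by (auto simp: xlift_def CN_def)

lemma image_xmap_CN:
  assumes "1 \<le> n" "2 * (n - 1) \<le> N"
  shows "xmap n ` CN N = Espan (n - 1)"
proof
  show "xmap n ` CN N \<subseteq> Espan (n - 1)" using xmap_in_Espan by auto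
  show "Espan (n - 1) \<subseteq> xmap n ` CN N"
    using xmap_xlift xlift_in_CN[OF assms] by (metis image_eqI subsetI)
qed

lemma xmap_span_subset:
  assumes "xmap n ` G \<subseteq> T" "cvs.subspace T"
  shows "xmap n ` cvs.span G \<subseteq> T"
proof -
  have "cvs.subspace {y. xmap n y \<in> T}"
    unfolding cvs.subspace_def using assms(2)
    by (auto simp: xmap_zero xmap_add xmap_scale cvs.subspace_0 cvs.subspace_add cvs.subspace_scale)
  then have "cvs.span G \<subseteq> {y. xmap n y \<in> T}"
    using assms(1) by (intro cvs.span_minimal) auto
  then show ?thesis by auto
qed

lemma wi_nth:
  assumes "1 \<le> l" "l \<le> n" "1 \<le> i" "i \<le> n"
  shows "wi N n i ! (l - 1) = (if l < i then n - l else if l = i then N else n + 1 - l)"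
  using assms by (auto simp: wi_def nth_append rev_nth nth_Cons')

lemma card_wi_le:
  assumes "1 \<le> i" "i \<le> n" "n \<le> N" "j \<le> n"
  shows "card {l. 1 \<le> l \<and> l \<le> j \<and> wi N n i ! (l - 1) \<le> m}
    = (if j < i then min j (j + m - (n - 1)) else if N \<le> m then j else min (j - 1) (j - 1 + m - (n - 1)))"
  using assms(4)
proof (induct j)
  case (Suc j)
  let ?P = "\<lambda>l. wi N n i ! (l - 1) \<le> m"
  have "{l. 1 \<le> l \<and> l \<le> Suc j \<and> ?P l} = {l. 1 \<le> l \<and> l \<le> j \<and> ?P l} \<union> (if ?P (Suc j) then {Suc j} else {})"
    by (auto simp: le_Suc_eq)
  moreover have "finite {l. 1 \<le> l \<and> l \<le> j \<and> ?P l}" by (rule finite_subset[of _ "{..j}"]) auto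
  ultimately have card_Suc: "card {l. 1 \<le> l \<and> l \<le> Suc j \<and> ?P l}
      = card {l. 1 \<le> l \<and> l \<le> j \<and> ?P l} + (if ?P (Suc j) then 1 else 0)"
    by (auto simp: card_insert_if)
  have IH: "card {l. 1 \<le> l \<and> l \<le> j \<and> ?P l} = (if j < i then min j (j + m - (n - 1))
      else if N \<le> m then j else min (j - 1) (j - 1 + m - (n - 1)))"
    using Suc by simp
  have w: "wi N n i ! (Suc j - 1) = (if Suc j < i then n - Suc j else if Suc j = i then N else n - j)"
    using wi_nth[of "Suc j" n i N] Suc(2) assms by simp
  show ?case unfolding card_Suc IH w using Suc(2) assms(1-3)
    by (cases "Suc j < i"; cases "Suc j = i"; cases "N \<le> m"; cases "n - Suc j \<le> m") (auto simp: min_def)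
qed simp

text \<open>The right-hand side of the theorem, with \<open>im x = Espan (n - 1)\<close>.\<close>

definition Zflags :: "nat \<Rightarrow> nat \<Rightarrow> nat \<Rightarrow> (nat \<Rightarrow> cvec set) set" where
  "Zflags N n i = {V \<in> Fl N n. V (i - 1) \<subseteq> Espan (n - 1) \<and> Espan (n - 1) \<subseteq> V n \<and>
     V n \<subseteq> {v \<in> CN N. xmap n v \<in> V (i - 1)}}"

lemma Zflags_subset_Yfib:
  assumes "N = n + s - 1" "2 \<le> n" "n - 1 \<le> s" "1 \<le> i" "i \<le> n"
  shows "Zflags N n i \<subseteq> Yfib n s"
proof
  fix V assume "V \<in> Zflags N n i"
  then have V: "V \<in> Fl N n" "V (i - 1) \<subseteq> Espan (n - 1)" "Espan (n - 1) \<subseteq> V n"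
      "V n \<subseteq> {v \<in> CN N. xmap n v \<in> V (i - 1)}"
    by (auto simp: Zflags_def)
  have "xmap n ` V j \<subseteq> V j" if j: "j \<le> n" for j
  proof (cases "j \<le> i - 1")
    case True
    moreover have "i - 1 \<le> n" using assms by simp
    ultimately have "V j \<subseteq> Espan (n - 1)" using Fl_mono[OF V(1)] V(2) by blast
    then show ?thesis using xmap_Espan cvs.subspace_0[OF Fl_subspace[OF V(1) j]] by fastforce
  next
    case False
    then have "V j \<subseteq> V n" "V (i - 1) \<subseteq> V j" using Fl_mono[OF V(1)] j by auto
    then show ?thesis using V(4) by auto
  qed
  moreover have "xmap n ` CN N = Espan (n - 1)" using assms by (intro image_xmap_CN) auto
  ultimately show "V \<in> Yfib n s" using V assms unfolding Yfib_def by auto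
qed

lemma dim_schubert_wi:
  assumes "F \<in> schubert_cell N n (wi N n i)" "1 \<le> i" "i \<le> n" "n \<le> N" "j \<le> n" "m \<le> N"
  shows "cvs.dim (F j \<inter> Espan m) = (if j < i then min j (j + m - (n - 1))
    else if N \<le> m then j else min (j - 1) (j - 1 + m - (n - 1)))"
  using assms card_wi_le[OF assms(2-5)] unfolding schubert_cell_def by auto

lemma xmap_image_subset_of_last_coordinate:
  assumes W: "cvs.subspace W" "W \<subseteq> Espan N" "W \<inter> Espan (N - 1) \<subseteq> Espan (n - 1)"
    and v: "v \<in> W" "v N \<noteq> 0" "xmap n v \<in> T" and T: "cvs.subspace T" and N: "1 \<le> N"
  shows "xmap n ` W \<subseteq> T"
proof
  fix z assume "z \<in> xmap n ` W"
  then obtain y where y: "y \<in> W" "z = xmap n y" by auto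
  define c where "c = y N / v N"
  have "y - cscale c v \<in> W" using y(1) v(1) W(1) by (simp add: cvs.subspace_diff cvs.subspace_scale)
  moreover have "(y - cscale c v) N = 0" using v(2) by (simp add: c_def cscale_def)
  ultimately have "y - cscale c v \<in> Espan (n - 1)"
    using W(2,3) Espan_pred_iff[OF _ N] by blast
  from xmap_Espan[OF this] have "xmap n y = cscale c (xmap n v)" by (simp add: xmap_diff xmap_scale)
  then show "z \<in> T" using y(2) v(3) T by (simp add: cvs.subspace_scale)
qed

lemma schubert_Yfib_subset_Zflags:
  assumes N: "N = n + s - 1" and n2: "2 \<le> n" and s: "n - 1 \<le> s" and i: "1 \<le> i" "i \<le> n"
  shows "schubert_cell N n (wi N n i) \<inter> Yfib n s \<subseteq> Zflags N n i"
proof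
  fix F assume F: "F \<in> schubert_cell N n (wi N n i) \<inter> Yfib n s"
  let ?q = "n - 1"
  have NN: "2 * ?q \<le> N" "n \<le> N" "?q < N" "?q \<le> N - 1" using N n2 s by auto
  have FFl: "F \<in> Fl N n" using F unfolding schubert_cell_def by auto
  have Y: "Espan ?q \<subseteq> F n" "\<And>j. j \<le> n \<Longrightarrow> xmap n ` F j \<subseteq> F j"
    using F N image_xmap_CN[of n N] NN n2 unfolding Yfib_def by auto
  have dim: "cvs.dim (F j \<inter> Espan m) = (if j < i then min j (j + m - ?q)
      else if N \<le> m then j else min (j - 1) (j - 1 + m - ?q))" if "j \<le> n" "m \<le> N" for j m
    using dim_schubert_wi[of F N n i j m] F i NN that by auto
  have sub: "cvs.subspace (F j \<inter> Espan m)" if "j \<le> n" for j m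
    using Fl_subspace[OF FFl that] subspace_Espan by (rule cvs.subspace_inter)
  have i1n: "i - 1 \<le> n" using i by simp
  have "F (i - 1) \<inter> Espan ?q = F (i - 1)"
  proof (rule subspace_eq_of_dim_le[OF Fl_fin_dim[OF FFl i1n] Int_lower1 sub[OF i1n]])
    show "cvs.dim (F (i - 1)) \<le> cvs.dim (F (i - 1) \<inter> Espan ?q)"
      using dim[OF i1n, of ?q] Fl_dim[OF FFl i1n] i NN by simp
  qed
  then have F1: "F (i - 1) \<subseteq> Espan ?q" by blast
  have "Espan ?q = F n \<inter> Espan (N - 1)"
  proof (rule subspace_eq_of_dim_le[OF fin_dim_subset[OF fin_dim_Espan Int_lower2] _ subspace_Espan])
    show "Espan ?q \<subseteq> F n \<inter> Espan (N - 1)" using Y(1) Espan_mono[OF NN(4)] by blast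
    show "cvs.dim (F n \<inter> Espan (N - 1)) \<le> cvs.dim (Espan ?q)"
      using dim[of n "N - 1"] dim_Espan[of ?q] i NN n2 by (auto simp: min_def)
  qed
  then have F3: "F n \<inter> Espan (N - 1) \<subseteq> Espan ?q" by simp
  have F4: "F (i - 1) = F i \<inter> Espan (N - 1)"
  proof (rule subspace_eq_of_dim_le[OF fin_dim_subset[OF Fl_fin_dim[OF FFl i(2)] Int_lower1] _
        Fl_subspace[OF FFl i1n]])
    show "F (i - 1) \<subseteq> F i \<inter> Espan (N - 1)"
      using Fl_mono[OF FFl, of "i - 1" i] F1 Espan_mono[OF NN(4)] i by auto
    show "cvs.dim (F i \<inter> Espan (N - 1)) \<le> cvs.dim (F (i - 1))"
      using dim[of i "N - 1"] Fl_dim[OF FFl i1n] i NN n2 by (auto simp: min_def)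
  qed
  have "\<not> F i \<subseteq> Espan (N - 1)"
  proof
    assume "F i \<subseteq> Espan (N - 1)"
    then have "F i = F (i - 1)" using F4 by auto
    then show False using Fl_dim[OF FFl i(2)] Fl_dim[OF FFl i1n] i by simp
  qed
  then obtain v where v: "v \<in> F i" "v \<notin> Espan (N - 1)" by auto
  have vN: "v \<in> Espan N" using v(1) Fl_subset_CN[OF FFl i(2)] by (auto simp: CN_eq_Espan)
  have "xmap n v \<in> F i \<inter> Espan (N - 1)"
    using Y(2)[OF i(2)] v(1) xmap_in_Espan[of n v] Espan_mono[OF NN(4)] by auto
  then have xv: "xmap n v \<in> F (i - 1)" using F4 by simp
  have "v N \<noteq> 0" using v(2) Espan_pred_iff[OF vN] NN by auto
  moreover have "v \<in> F n" using v(1) Fl_mono[OF FFl i(2) order_refl] by blast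
  moreover have "F n \<subseteq> Espan N" using Fl_subset_CN[OF FFl order_refl] by (simp add: CN_eq_Espan)
  ultimately have "xmap n ` F n \<subseteq> F (i - 1)"
    using xmap_image_subset_of_last_coordinate[OF Fl_subspace[OF FFl order_refl] _ F3 _ _ xv
        Fl_subspace[OF FFl i1n]] NN by simp
  then show "F \<in> Zflags N n i"
    using FFl F1 Y(1) Fl_subset_CN[OF FFl order_refl] by (auto simp: Zflags_def)
qed

lemma in_schubert_wi:
  assumes F: "F \<in> Fl N n" and nN: "n \<le> N" and i: "1 \<le> i" "i \<le> n"
    and lo: "\<And>j. j < i \<Longrightarrow> F j \<subseteq> Espan (n - 1) \<and> F j \<inter> Espan (n - 1 - j) \<subseteq> {0}"
    and hi: "\<And>j. i \<le> j \<Longrightarrow> j \<le> n \<Longrightarrow> F j \<inter> Espan (N - 1) \<subseteq> Espan (n - 1)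
        \<and> cvs.dim (F j \<inter> Espan (N - 1)) = j - 1 \<and> F j \<inter> Espan (n - j) \<subseteq> {0}"
  shows "F \<in> schubert_cell N n (wi N n i)"
proof -
  have "cvs.dim (F j \<inter> Espan m) = card {l. 1 \<le> l \<and> l \<le> j \<and> wi N n i ! (l - 1) \<le> m}"
    if j: "j \<le> n" and m: "m \<le> N" for j m
  proof (cases "j < i")
    case True
    have "cvs.dim (F j \<inter> Espan m) = min j (j + m - (n - 1))"
      using Fl_subspace[OF F j] Fl_dim[OF F j] lo[OF True] True i
      by (intro dim_inter_Espan_transversal) auto
    then show ?thesis using card_wi_le[OF i nN j] True by simp
  next
    case False
    show ?thesis
    proof (cases "N \<le> m")
      case True
      have "F j \<subseteq> Espan m" using Fl_subset_CN[OF F j] Espan_mono[OF True] by (auto simp: CN_eq_Espan)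
      then have "F j \<inter> Espan m = F j" by auto
      then show ?thesis using card_wi_le[OF i nN j] True False Fl_dim[OF F j] by simp
    next
      case False2: False
      have "n - 1 - (j - 1) = n - j" using False i by simp
      then have h: "F j \<inter> Espan (N - 1) \<subseteq> Espan (n - 1)" "cvs.dim (F j \<inter> Espan (N - 1)) = j - 1"
        "F j \<inter> Espan (N - 1) \<inter> Espan (n - 1 - (j - 1)) \<subseteq> {0}"
        using hi[of j] False j by auto
      have "m \<le> N - 1" using False2 by simp
      then have "F j \<inter> Espan m = (F j \<inter> Espan (N - 1)) \<inter> Espan m"
        using Espan_mono by blast
      also have "cvs.dim \<dots> = min (j - 1) (j - 1 + m - (n - 1))"
        using h Fl_subspace[OF F j] subspace_Espan j
        by (intro dim_inter_Espan_transversal cvs.subspace_inter) auto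
      finally show ?thesis using card_wi_le[OF i nN j] False False2 by simp
    qed
  qed
  then show ?thesis using F unfolding schubert_cell_def Espan_def[symmetric] by blast
qed

lemma Espan_closed:
  assumes "\<forall>k. w k \<in> Espan q" "\<forall>m. (\<lambda>k. w k m) \<longlonglongrightarrow> w0 m"
  shows "w0 \<in> Espan q"
  unfolding Espan_eq mem_Collect_eq
proof (intro allI impI)
  fix m assume "m < 1 \<or> q < m"
  then have "(\<lambda>k. w k m) = (\<lambda>k. 0)" using assms(1) by (auto simp: Espan_eq)
  then have "(\<lambda>k. w k m) \<longlonglongrightarrow> 0" by simp
  then show "w0 m = 0" using LIMSEQ_unique assms(2) by blast
qed

lemma limit_in_flag_of:
  assumes u: "flag_of n u \<in> Fl N n" and j: "j \<le> n"
    and lim: "\<forall>j m. (\<lambda>k. U k j m) \<longlonglongrightarrow> u j m"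
    and b: "\<forall>k. b k \<in> flag_of n (U k) j" "\<forall>m. (\<lambda>k. b k m) \<longlonglongrightarrow> b0 m"
  shows "b0 \<in> flag_of n u j"
proof -
  have "indep_family {1..j} u"
    using indep_family_subset[OF _ _ indep_family_of_flag_of[OF u]] j by auto
  moreover have "\<forall>k. \<exists>c. b k = lincomb {1..j} c (U k)"
    using b(1) j by (simp add: flag_of_eq_span in_span_image_iff)
  ultimately have "\<exists>c. b0 = lincomb {1..j} c u"
    using lim b(2) by (intro lincomb_of_limit[where U = U and b = b]) auto
  then show ?thesis using j by (simp add: flag_of_eq_span in_span_image_iff)
qed

lemma Zflags_closed:
  assumes i: "1 \<le> i" "i \<le> n" and u: "flag_of n u \<in> Fl N n"
    and UZ: "\<And>k. flag_of n (U k) \<in> Zflags N n i"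
    and lim: "\<forall>j m. (\<lambda>k. U k j m) \<longlonglongrightarrow> u j m"
  shows "flag_of n u \<in> Zflags N n i"
proof -
  let ?q = "n - 1" and ?F = "flag_of n u"
  have i1n: "i - 1 \<le> n" using i by simp
  have UZ': "flag_of n (U k) (i - 1) \<subseteq> Espan ?q" "Espan ?q \<subseteq> flag_of n (U k) n"
    "flag_of n (U k) n \<subseteq> {v \<in> CN N. xmap n v \<in> flag_of n (U k) (i - 1)}" for k
    using UZ[of k] by (auto simp: Zflags_def)
  have "u l \<in> Espan ?q" if l: "l \<in> {1..i - 1}" for l
  proof (rule Espan_closed)
    show "\<forall>k. U k l \<in> Espan ?q"
    proof
      fix k
      have "U k l \<in> flag_of n (U k) (i - 1)"
        unfolding flag_of_eq_span[OF i1n] using l by (intro cvs.span_base) auto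
      then show "U k l \<in> Espan ?q" using UZ'(1) by blast
    qed
  qed (use lim in auto)
  then have F1: "?F (i - 1) \<subseteq> Espan ?q"
    unfolding flag_of_eq_span[OF i1n] by (intro cvs.span_minimal subspace_Espan) auto
  have F2: "Espan ?q \<subseteq> ?F n"
    using limit_in_flag_of[OF u order_refl lim, of "\<lambda>k. _"] UZ'(2) by blast
  have xu: "xmap n (u l) \<in> ?F (i - 1)" if l: "l \<in> {1..n}" for l
  proof (rule limit_in_flag_of[OF u i1n lim])
    show "\<forall>k. xmap n (U k l) \<in> flag_of n (U k) (i - 1)"
    proof
      fix k
      have "U k l \<in> flag_of n (U k) n"
        unfolding flag_of_eq_span[OF order_refl] using l by (intro cvs.span_base) auto
      then show "xmap n (U k l) \<in> flag_of n (U k) (i - 1)" using UZ'(3) by blast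
    qed
    show "\<forall>m. (\<lambda>k. xmap n (U k l) m) \<longlonglongrightarrow> xmap n (u l) m"
    proof
      fix m
      show "(\<lambda>k. xmap n (U k l) m) \<longlonglongrightarrow> xmap n (u l) m"
      proof (cases "1 \<le> m \<and> m \<le> n - 1")
        case True
        then show ?thesis using lim by (simp add: xmap_def)
      next
        case False
        then have "(\<lambda>k. xmap n (U k l) m) = (\<lambda>k. 0)" "xmap n (u l) m = 0"
          by (simp_all only: xmap_def if_False)
        then show ?thesis by simp
      qed
    qed
  qed
  have "xmap n y \<in> ?F (i - 1)" if y: "y \<in> ?F n" for y
  proof -
    obtain c where "y = lincomb {1..n} c u" using y by (auto simp: flag_of_eq_span in_span_image_iff)
    then show ?thesis
      using xu Fl_subspace[OF u i1n] by (simp add: xmap_lincomb lincomb_in_subspace)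
  qed
  then show ?thesis using u F1 F2 Fl_subset_CN[OF u order_refl] by (auto simp: Zflags_def)
qed

lemma Fl_exists_new_vector:
  assumes V: "V \<in> Fl N n" and j: "1 \<le> j" "j \<le> n"
  shows "\<exists>y. y \<in> V j \<and> y \<notin> V (j - 1)"
proof (rule ccontr)
  assume "\<not> ?thesis"
  then have "V j \<subseteq> V (j - 1)" by blast
  then have "cvs.dim (V j) \<le> cvs.dim (V (j - 1))" using dim_mono Fl_fin_dim[OF V, of "j - 1"] j by simp
  then show False using Fl_dim[OF V, of j] Fl_dim[OF V, of "j - 1"] j by simp
qed

text \<open>Here \<open>V n = Espan (n - 1) + span {up}\<close>, so a new vector of \<open>V j\<close> can be corrected into
  \<open>Espan (n - 1)\<close> by a multiple of \<open>up \<in> V (j - 1)\<close>.\<close>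

lemma Fl_exists_new_vector_in_Espan:
  assumes V: "V \<in> Fl N n" and n2: "2 \<le> n" and I: "Espan (n - 1) \<subseteq> V n"
    and up: "up \<in> V p" "up \<notin> Espan (n - 1)" and j: "p < j" "j \<le> n"
  shows "\<exists>y. y \<in> V j \<and> y \<in> Espan (n - 1) \<and> y \<notin> V (j - 1)"
proof -
  let ?q = "n - 1"
  let ?D = "cvs.span (insert up (Espan ?q))"
  have jn: "p \<le> j - 1" "j - 1 \<le> n" using j by auto
  then have upj: "up \<in> V (j - 1)" using up(1) Fl_mono[OF V] by blast
  have "?D = V n"
  proof (rule subspace_eq_of_dim_le[OF Fl_fin_dim[OF V order_refl] _ cvs.subspace_span])
    show "?D \<subseteq> V n"
      using upj Fl_mono[OF V jn(2) order_refl] I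
      by (intro cvs.span_minimal Fl_subspace[OF V order_refl]) auto
    have "cvs.dim (Espan ?q) + 1 \<le> cvs.dim ?D"
      using up(2) fin_dim_Espan by (intro dim_insert_ge) (simp_all add: Espan_def cvs.span_span)
    then show "cvs.dim (V n) \<le> cvs.dim ?D" using dim_Espan[of ?q] Fl_dim[OF V order_refl] n2 by simp
  qed
  obtain y where y: "y \<in> V j" "y \<notin> V (j - 1)" using Fl_exists_new_vector[OF V _ j(2)] j by auto
  then have "y \<in> ?D" using Fl_mono[OF V j(2) order_refl] \<open>?D = V n\<close> by auto
  then obtain c where "y - cscale c up \<in> cvs.span (Espan ?q)" using cvs.span_breakdown_eq by blast
  then have c: "y - cscale c up \<in> Espan ?q" using cvs.span_eq_iff subspace_Espan by blast
  have sub: "cvs.subspace (V (j - 1))" "cvs.subspace (V j)" using Fl_subspace[OF V] j by auto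
  have "y - cscale c up \<in> V j"
    using y(1) upj Fl_mono[OF V, of "j - 1" j] sub(2) j
    by (auto intro!: cvs.subspace_diff cvs.subspace_scale)
  moreover have "y - cscale c up \<notin> V (j - 1)"
  proof
    assume "y - cscale c up \<in> V (j - 1)"
    then have "(y - cscale c up) + cscale c up \<in> V (j - 1)"
      using sub(1) upj by (intro cvs.subspace_add cvs.subspace_scale) auto
    then show False using y(2) by simp
  qed
  ultimately show ?thesis using c by blast
qed

lemma Zflags_adapted_frame:
  assumes n2: "2 \<le> n" and i: "1 \<le> i" "i \<le> n"
    and V: "V \<in> Fl N n" "V (i - 1) \<subseteq> Espan (n - 1)" "Espan (n - 1) \<subseteq> V n"
  obtains u p where "flag_of n u = V" "i \<le> p" "p \<le> n" "\<forall>l\<in>{1..n} - {p}. u l \<in> Espan (n - 1)"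
proof -
  let ?q = "n - 1"
  have Vn: "\<not> V n \<subseteq> Espan ?q"
  proof
    assume "V n \<subseteq> Espan ?q"
    then have "cvs.dim (V n) \<le> cvs.dim (Espan ?q)" using dim_mono[OF fin_dim_Espan] by blast
    then show False using Fl_dim[OF V(1) order_refl] dim_Espan[of ?q] n2 by simp
  qed
  then have ex: "\<exists>j. \<not> V j \<subseteq> Espan ?q" by blast
  define p where "p = (LEAST j. \<not> V j \<subseteq> Espan ?q)"
  have p1: "\<not> V p \<subseteq> Espan ?q" unfolding p_def using LeastI_ex[OF ex] .
  have p2: "V j \<subseteq> Espan ?q" if "j < p" for j using not_less_Least[OF that[unfolded p_def]] by simp
  have pn: "p \<le> n" using p2 Vn by (meson not_le)
  have ip: "i \<le> p"
  proof (rule ccontr)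
    assume "\<not> i \<le> p"
    then have "V p \<subseteq> V (i - 1)" using Fl_mono[OF V(1), of p "i - 1"] i by simp
    then show False using p1 V(2) by blast
  qed
  obtain up where up: "up \<in> V p" "up \<notin> Espan ?q" using p1 by blast
  define u where "u j = (if j = p then up else if j < p then (SOME y. y \<in> V j \<and> y \<notin> V (j - 1))
      else (SOME y. y \<in> V j \<and> y \<in> Espan ?q \<and> y \<notin> V (j - 1)))" for j
  have ulo: "u j \<in> V j \<and> u j \<notin> V (j - 1)" if "j \<in> {1..n}" "j < p" for j
    using someI_ex[OF Fl_exists_new_vector[OF V(1)]] that by (simp add: u_def)
  have uhi: "u j \<in> V j \<and> u j \<in> Espan ?q \<and> u j \<notin> V (j - 1)" if "j \<in> {1..n}" "p < j" for j
    using someI_ex[OF Fl_exists_new_vector_in_Espan[OF V(1) n2 V(3) up]] that by (simp add: u_def)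
  have "u p \<notin> V (p - 1)" using up(2) p2[of "p - 1"] ip i by (auto simp: u_def)
  then have "\<forall>j\<in>{1..n}. u j \<in> V j \<and> u j \<notin> V (j - 1)"
    using ulo uhi up(1) by (metis linorder_neqE_nat u_def)
  then have "flag_of n u = V" by (rule flag_of_adapted_frame[OF V(1)])
  moreover have "\<forall>l\<in>{1..n} - {p}. u l \<in> Espan ?q"
    using ulo uhi p2 by (metis Diff_iff insertI1 linorder_neqE_nat subsetD)
  ultimately show ?thesis using that ip pn by blast
qed

section \<open>Deforming a flag of \<open>Zflags\<close> into the Schubert cell\<close>

lemma finite_roots_monic_quadratic: "finite {t::complex. a + b * t + t ^ 2 = 0}"
proof (cases "\<exists>t1. a + b * t1 + t1 ^ 2 = 0")
  case True
  then obtain t1 where t1: "a + b * t1 + t1 ^ 2 = 0" by blast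
  have "t \<in> {t1, - b - t1}" if "a + b * t + t ^ 2 = 0" for t
  proof -
    have "(t - t1) * (t + t1 + b) = (a + b * t + t ^ 2) - (a + b * t1 + t1 ^ 2)"
      by (simp add: algebra_simps power2_eq_square)
    then have "t - t1 = 0 \<or> t + t1 + b = 0" using that t1 by simp
    then show ?thesis by (auto simp: eq_neg_iff_add_eq_0 algebra_simps)
  qed
  then have "{t. a + b * t + t ^ 2 = 0} \<subseteq> {t1, - b - t1}" by blast
  then show ?thesis by (rule finite_subset) simp
qed simp

lemma span_insert_insert_add_scale:
  "cvs.span (insert a (insert (b + cscale c a) S)) = cvs.span (insert a (insert b S))"
proof -
  have "b + cscale c a \<in> cvs.span (insert a (insert b S))"
    by (intro cvs.span_add cvs.span_scale cvs.span_base) auto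
  moreover have "b = (b + cscale c a) - cscale c a" by simp
  then have "b \<in> cvs.span (insert a (insert (b + cscale c a) S))"
    by (metis cvs.span_base cvs.span_diff cvs.span_scale insertCI)
  ultimately show ?thesis
    by (intro cvs.span_eq[THEN iffD2] conjI) (auto intro: cvs.span_base)
qed

text \<open>A deformation \<open>frame t\<close> of an adapted frame \<open>u\<close> of a flag in \<open>Zflags\<close>, with \<open>frame 0 = u\<close>.
  Each \<open>u l\<close>, \<open>l \<noteq> p\<close>, is moved by \<open>t e (slot l)\<close>; on the indices \<open>Iidx j\<close> of the vectors spanning the
  \<open>Espan (n - 1)\<close>-part of the \<open>j\<close>-th space the slots are distinct and fill \<open>{level j + 1..n - 1}\<close>, which
  makes that part transversal to the coordinate flag for generic \<open>t\<close>.  The vector \<open>u p\<close> becomes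
  \<open>P t = u p + t P1 + t\<^sup>2 P2\<close>, with \<open>P1\<close>, \<open>P2\<close> built from the section \<open>xlift\<close> of \<open>x\<close> so that
  \<open>x (P t)\<close> stays in the span of the first \<open>i - 1\<close> moved vectors while the last coordinate of \<open>P t\<close> is a
  nonzero polynomial in \<open>t\<close>: it comes from \<open>e N\<close> if \<open>N > 2 (n - 1)\<close>, and otherwise from
  \<open>t\<^sup>2 xlift (e (slot 1))\<close>, which needs \<open>i \<ge> 2\<close>.\<close>

locale deformation =
  fixes n s i N p :: nat and u :: "nat \<Rightarrow> cvec" and \<alpha> :: "nat \<Rightarrow> complex"
  assumes N: "N = n + s - 1" and n2: "2 \<le> n" and s: "n - 1 \<le> s" and i1: "1 \<le> i" and iN: "i \<le> n"
    and adm: "s = n - 1 \<Longrightarrow> 2 \<le> i"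
    and ip: "i \<le> p" and pn: "p \<le> n"
    and uI: "\<forall>l\<in>{1..n} - {p}. u l \<in> Espan (n - 1)"
    and uCN: "\<forall>l\<in>{1..n}. u l \<in> CN N"
    and xup: "xmap n (u p) = lincomb {1..i - 1} \<alpha> u"
begin

abbreviation "q \<equiv> n - 1"

definition slot :: "nat \<Rightarrow> nat" where
  "slot l = (if l < i then q + 1 - l else if l = i then q + 2 - p else q + 2 - l)"

definition Iidx :: "nat \<Rightarrow> nat set" where
  "Iidx j = (if j < i then {1..j} else {1..j} - {if j < p then i else p})"

definition level :: "nat \<Rightarrow> nat" where
  "level j = (if j < i then q - j else q + 1 - j)"

lemma N_bounds: "2 * q \<le> N" "n \<le> N" "q < N" "1 \<le> N"
  using N n2 s by auto

lemma finite_Iidx: "finite (Iidx j)"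
  by (simp add: Iidx_def)

lemma Iidx_subset: "Iidx j \<subseteq> {1..j}"
  by (auto simp: Iidx_def)

lemma p_notin_Iidx: "j \<le> n \<Longrightarrow> l \<in> Iidx j \<Longrightarrow> l \<noteq> p"
  using ip by (auto simp: Iidx_def split: if_splits)

lemma card_Iidx: "j \<le> n \<Longrightarrow> card (Iidx j) = (if j < i then j else j - 1)"
  using i1 ip by (auto simp: Iidx_def)

lemma slot_in_range: "j \<le> n \<Longrightarrow> l \<in> Iidx j \<Longrightarrow> slot l \<in> {level j + 1..q}"
  using i1 ip pn by (auto simp: slot_def Iidx_def level_def split: if_splits)

lemma slot_range_frame: "l \<in> {1..n} \<Longrightarrow> slot l \<in> {1..q + 1}"
  using ip pn by (auto simp: slot_def)

lemma inj_on_slot: "j \<le> n \<Longrightarrow> inj_on slot (Iidx j)"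
  using ip pn by (auto simp: inj_on_def slot_def Iidx_def split: if_splits)

lemma slot_image:
  assumes "j \<le> n"
  shows "slot ` Iidx j = {level j + 1..q}"
proof (rule card_seteq)
  show "slot ` Iidx j \<subseteq> {level j + 1..q}" using slot_in_range[OF assms] by blast
  show "card {level j + 1..q} \<le> card (slot ` Iidx j)"
    using card_image[OF inj_on_slot[OF assms]] card_Iidx[OF assms] assms iN n2 by (simp add: level_def)
qed simp

definition pert_dir :: "nat \<Rightarrow> cvec" where "pert_dir l = e (slot l)"

definition P1 :: cvec where
  "P1 = lincomb {1..i - 1} \<alpha> (\<lambda>l. xlift n (pert_dir l)) + (if 2 * q < N then e N else xlift n (u 1))"

definition P2 :: cvec where "P2 = (if 2 * q < N then 0 else xlift n (pert_dir 1))"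

definition Avec :: "complex \<Rightarrow> nat \<Rightarrow> cvec" where "Avec t l = u l + cscale t (pert_dir l)"

definition P :: "complex \<Rightarrow> cvec" where "P t = u p + cscale t P1 + cscale (t ^ 2) P2"

definition frame :: "complex \<Rightarrow> nat \<Rightarrow> cvec" where
  "frame t l = (if l = p then P t else if l = i then Avec t i + cscale t (P t) else Avec t l)"

lemma frame_other: "l \<noteq> p \<Longrightarrow> l \<noteq> i \<Longrightarrow> frame t l = Avec t l"
  by (simp add: frame_def)

lemma frame_p: "frame t p = P t" by (simp add: frame_def)

lemma frame_i: "p \<noteq> i \<Longrightarrow> frame t i = Avec t i + cscale t (P t)"
  using ip by (simp add: frame_def)

lemma frame_apply: "frame t l m = (if l = p then u p m + t * P1 m + t\<^sup>2 * P2 m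
    else if l = i then u i m + t * pert_dir i m + t * (u p m + t * P1 m + t\<^sup>2 * P2 m)
    else u l m + t * pert_dir l m)"
  by (simp add: frame_def P_def Avec_def cscale_def)

lemma frame_lim: "tk \<longlonglongrightarrow> 0 \<Longrightarrow> (\<lambda>k. frame (tk k) l m) \<longlonglongrightarrow> u l m"
  unfolding frame_apply by (cases "l = p"; cases "l = i") (auto intro!: tendsto_eq_intros)

lemma pert_dir_in_Espan: "j \<le> n \<Longrightarrow> l \<in> Iidx j \<Longrightarrow> pert_dir l \<in> Espan q"
  by (auto simp: pert_dir_def intro!: e_in_Espan dest!: slot_in_range)

lemma pert_dir_lo: "l \<in> {1..i - 1} \<Longrightarrow> pert_dir l \<in> Espan q"
  using iN by (auto simp: pert_dir_def slot_def intro!: e_in_Espan)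

lemma Avec_in_Espan: assumes "j \<le> n" "l \<in> Iidx j" shows "Avec t l \<in> Espan q"
proof -
  have "l \<in> {1..n} - {p}" using Iidx_subset[of j] assms p_notin_Iidx[OF assms] by auto
  then have "u l \<in> Espan q" using uI by blast
  then show ?thesis unfolding Avec_def using pert_dir_in_Espan[OF assms] subspace_Espan
    by (intro cvs.subspace_add cvs.subspace_scale) auto
qed

lemma frame_in_CN:
  assumes "l \<in> {1..n}"
  shows "frame t l \<in> CN N"
proof -
  have pert_dir_CN: "pert_dir l' \<in> CN N" if "l' \<in> {1..n}" for l'
    using slot_range_frame[OF that] N_bounds by (auto simp: pert_dir_def intro!: e_in_CN)
  have xlift_CN: "xlift n y \<in> CN N" for y using xlift_in_CN N_bounds n2 by auto
  have "P1 \<in> CN N" unfolding P1_def using xlift_CN N_bounds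
    by (intro cvs.subspace_add[OF subspace_CN] lincomb_in_subspace[OF subspace_CN]) (auto intro!: e_in_CN)
  moreover have "P2 \<in> CN N" unfolding P2_def using xlift_CN cvs.subspace_0[OF subspace_CN] by auto
  moreover have "u p \<in> CN N" using uCN ip pn i1 by auto
  ultimately have "P t \<in> CN N" unfolding P_def
    by (intro cvs.subspace_add[OF subspace_CN] cvs.subspace_scale[OF subspace_CN])
  moreover have "Avec t l \<in> CN N" unfolding Avec_def using assms uCN pert_dir_CN
    by (intro cvs.subspace_add[OF subspace_CN] cvs.subspace_scale[OF subspace_CN]) auto
  ultimately show ?thesis unfolding frame_def using subspace_CN
    by (auto intro!: cvs.subspace_add cvs.subspace_scale simp: frame_def Avec_def)
qed

lemma xmap_Avec: "j \<le> n \<Longrightarrow> l \<in> Iidx j \<Longrightarrow> xmap n (Avec t l) = 0"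
  using Avec_in_Espan xmap_Espan by blast

lemma i_ge_2_if_N_eq: "\<not> 2 * q < N \<Longrightarrow> 2 \<le> i" using N n2 s adm by auto

lemma xmap_P:
  "xmap n (P t) = lincomb {1..i - 1} \<alpha> (Avec t) + (if 2 * q < N then 0 else cscale t (Avec t 1))"
proof -
  have xl: "xmap n (xlift n (pert_dir l)) = pert_dir l" if "l \<in> {1..i - 1}" for l
    using pert_dir_lo[OF that] by (rule xmap_xlift)
  then have "lincomb {1..i - 1} \<alpha> (\<lambda>l. xmap n (xlift n (pert_dir l))) = lincomb {1..i - 1} \<alpha> pert_dir"
    by (auto simp: lincomb_def intro!: ext sum.cong)
  moreover have "xmap n (if 2 * q < N then e N else xlift n (u 1)) = (if 2 * q < N then 0 else u 1)"
  proof (cases "2 * q < N")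
    case True
    then show ?thesis by (auto simp: xmap_def e_def fun_eq_iff)
  next
    case False
    then have "1 \<noteq> p" using i_ge_2_if_N_eq ip by fastforce
    then have "u 1 \<in> Espan q" using uI n2 by auto
    then show ?thesis using False by (simp add: xmap_xlift)
  qed
  ultimately have xP1: "xmap n P1 = lincomb {1..i - 1} \<alpha> pert_dir + (if 2 * q < N then 0 else u 1)"
    by (simp add: P1_def xmap_add xmap_lincomb)
  have xP2: "xmap n P2 = (if 2 * q < N then 0 else pert_dir 1)"
  proof (cases "2 * q < N")
    case False
    then have "1 \<in> {1..i - 1}" using i_ge_2_if_N_eq by simp
    then show ?thesis using False xl by (simp add: P2_def)
  qed (simp add: P2_def xmap_zero)
  have "xmap n (P t) = xmap n (u p) + cscale t (xmap n P1) + cscale (t ^ 2) (xmap n P2)"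
    by (simp only: P_def xmap_add xmap_scale)
  also have "\<dots> = lincomb {1..i - 1} \<alpha> (Avec t) + (if 2 * q < N then 0 else cscale t (Avec t 1))"
    unfolding xup xP1 xP2
    by (auto simp: lincomb_def Avec_def cscale_def fun_eq_iff sum.distrib sum_distrib_left algebra_simps
        power2_eq_square)
  finally show ?thesis .
qed

lemma P_N: "P t N = u p N + t * P1 N + t ^ 2 * P2 N"
  by (simp add: P_def cscale_def)

lemma finite_P_N_zero: "finite {t. P t N = 0}"
proof (cases "2 * q < N")
  case True
  have "xlift n y N = 0" for y using True by (simp add: xlift_def)
  then have "P1 N = 1" "P2 N = 0" using True by (simp_all add: P1_def P2_def lincomb_def e_def)
  then have "{t. P t N = 0} \<subseteq> {- u p N}" by (auto simp: P_N add_eq_0_iff)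
  then show ?thesis by (rule finite_subset) simp
next
  case False
  then have NE: "N = 2 * q" using N_bounds by simp
  have i2: "2 \<le> i" using i_ge_2_if_N_eq[OF False] .
  have s1: "slot 1 = q" using i2 by (simp add: slot_def)
  have "P2 = xlift n (pert_dir 1)" using False by (simp add: P2_def)
  moreover have "xlift n (pert_dir 1) N = pert_dir 1 (N - q)" using N_bounds(2) NE by (simp add: xlift_def)
  moreover have "N - q = q" using NE by simp
  ultimately have "P2 N = pert_dir 1 q" by simp
  also have "\<dots> = 1" using s1 by (simp add: pert_dir_def e_def)
  finally have "P2 N = 1" .
  then have "{t. P t N = 0} = {t. u p N + P1 N * t + t ^ 2 = 0}" by (auto simp: P_N algebra_simps)
  then show ?thesis using finite_roots_monic_quadratic by simp
qed

definition Qvec :: "complex \<Rightarrow> nat \<Rightarrow> cvec" where "Qvec t j = (if j < p then frame t i else P t)"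

definition Ipart :: "complex \<Rightarrow> nat \<Rightarrow> cvec set" where "Ipart t j = cvs.span (Avec t ` Iidx j)"

definition good :: "complex \<Rightarrow> bool" where
  "good t \<longleftrightarrow> t \<noteq> 0 \<and> P t N \<noteq> 0 \<and>
     (\<forall>j\<le>n. indep_mod_Espan (level j) (Iidx j) (Avec t))"

lemma finite_not_good: "finite {t. \<not> good t}"
proof -
  have "Avec t = (\<lambda>l. u l + cscale t (e (slot l)))" for t
    by (simp add: Avec_def pert_dir_def fun_eq_iff)
  then have "finite {t. \<not> indep_mod_Espan (level j) (Iidx j) (Avec t)}" if "j \<le> n" for j
    using finite_not_indep_mod_Espan[OF finite_Iidx inj_on_slot[OF that] slot_image[OF that], of u]
    by simp
  moreover have "{t. \<not> good t} \<subseteq> {0} \<union> {t. P t N = 0} \<union>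
      (\<Union>j\<in>{..n}. {t. \<not> indep_mod_Espan (level j) (Iidx j) (Avec t)})"
    by (auto simp: good_def)
  ultimately show ?thesis using finite_P_N_zero by (auto intro: finite_subset)
qed

lemma flag_frame_lo: assumes "j < i" shows "flag_of n (frame t) j = Ipart t j"
proof -
  have "frame t ` {1..j} = Avec t ` Iidx j"
    using assms ip by (auto simp: Iidx_def frame_other intro!: image_cong)
  then show ?thesis using assms iN by (simp add: flag_of_eq_span Ipart_def)
qed

lemma i_in_Iidx: "p \<noteq> i \<Longrightarrow> p \<le> j \<Longrightarrow> j \<le> n \<Longrightarrow> i \<in> Iidx j"
  using ip i1 by (auto simp: Iidx_def)

lemma flag_frame_hi:
  assumes j: "i \<le> j" "j \<le> n"
  shows "flag_of n (frame t) j = cvs.span (insert (Qvec t j) (Avec t ` Iidx j))"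
proof -
  have frame_eq_Avec: "frame t ` X = Avec t ` X" if "i \<notin> X" "p \<notin> X" for X
    using that by (intro image_cong refl frame_other) auto
  consider "j < p" | "p \<le> j" "p = i" | "p \<le> j" "p \<noteq> i" by linarith
  then have "cvs.span (frame t ` {1..j}) = cvs.span (insert (Qvec t j) (Avec t ` Iidx j))"
  proof cases
    case 1
    then have "{1..j} = insert i (Iidx j)" "i \<notin> Iidx j" "p \<notin> Iidx j" using i1 j by (auto simp: Iidx_def)
    then show ?thesis using frame_eq_Avec 1 by (simp add: Qvec_def)
  next
    case 2
    have "{1..j} = insert p (Iidx j)" "p \<notin> Iidx j" using 2(1) i1 ip j by (auto simp: Iidx_def)
    moreover have "i \<notin> Iidx j" using 2(2) \<open>p \<notin> Iidx j\<close> by simp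
    ultimately show ?thesis using frame_eq_Avec 2(1) by (simp add: Qvec_def frame_p)
  next
    case 3
    define X where "X = {1..j} - {i, p}"
    have "{1..j} = insert p (insert i X)" "Iidx j = insert i X" "i \<notin> X" "p \<notin> X"
      using 3 i1 j ip by (auto simp: X_def Iidx_def)
    then show ?thesis
      using frame_eq_Avec 3 span_insert_insert_add_scale[of "P t" "Avec t i" t "Avec t ` X"]
      by (simp add: Qvec_def frame_p frame_i)
  qed
  then show ?thesis using j by (simp add: flag_of_eq_span)
qed

lemma Ipart_subset_Espan: "j \<le> n \<Longrightarrow> Ipart t j \<subseteq> Espan q"
  unfolding Ipart_def using Avec_in_Espan by (intro cvs.span_minimal subspace_Espan) auto

lemma last_coord_Espan_q: "y \<in> Espan q \<Longrightarrow> y N = 0" using N_bounds by (auto simp: Espan_eq)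

lemma Qvec_N: assumes "good t" "i \<le> j" "j \<le> n" shows "Qvec t j N \<noteq> 0"
proof (cases "j < p")
  case True
  then have pi: "p \<noteq> i" using assms by auto
  have "Avec t i \<in> Espan q" using Avec_in_Espan[OF pn i_in_Iidx[OF pi order_refl pn]] .
  then have "Avec t i N = 0" by (rule last_coord_Espan_q)
  then have "frame t i N = t * P t N" using frame_i[OF pi] by (simp add: cscale_def)
  then show ?thesis using True assms(1) by (simp add: Qvec_def good_def)
next
  case False then show ?thesis using assms(1) by (simp add: Qvec_def good_def)
qed

lemma indep_family_Ipart: assumes "good t" "j \<le> n" shows "indep_family (Iidx j) (Avec t)"
  using assms indep_family_of_indep_mod_Espan by (auto simp: good_def)

lemma dim_Ipart: assumes "good t" "j \<le> n" shows "cvs.dim (Ipart t j) = card (Iidx j)"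
  unfolding Ipart_def using dim_span_indep_family[OF finite_Iidx indep_family_Ipart[OF assms]] .

lemma Ipart_inter_Espan: assumes "good t" "j \<le> n" shows "Ipart t j \<inter> Espan (level j) \<subseteq> {0}"
  using span_inter_Espan_trivial[OF finite_Iidx] assms by (auto simp: good_def Ipart_def)

lemma flag_frame_inter_hyperplane: assumes g: "good t" and j: "i \<le> j" "j \<le> n"
  shows "flag_of n (frame t) j \<inter> Espan (N - 1) = Ipart t j"
proof
  show "Ipart t j \<subseteq> flag_of n (frame t) j \<inter> Espan (N - 1)"
  proof -
    have "Ipart t j \<subseteq> flag_of n (frame t) j" unfolding flag_frame_hi[OF j] Ipart_def by (intro cvs.span_mono) auto
    moreover have "q \<le> N - 1" using N_bounds by simp
    then have "Ipart t j \<subseteq> Espan (N - 1)" using Ipart_subset_Espan[OF j(2), of t] Espan_mono[of q "N - 1"] by blast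
    ultimately show ?thesis by auto
  qed
  show "flag_of n (frame t) j \<inter> Espan (N - 1) \<subseteq> Ipart t j"
  proof
    fix y assume y: "y \<in> flag_of n (frame t) j \<inter> Espan (N - 1)"
    then have "y \<in> cvs.span (insert (Qvec t j) (Avec t ` Iidx j))" using flag_frame_hi[OF j] by auto
    then obtain c where c: "y - cscale c (Qvec t j) \<in> Ipart t j" unfolding Ipart_def using cvs.span_breakdown_eq by blast
    have "(y - cscale c (Qvec t j)) N = 0" using Ipart_subset_Espan[OF j(2)] c last_coord_Espan_q by blast
    moreover have "y N = 0" using y N_bounds Espan_pred_iff[of y N] by (auto simp: Espan_eq)
    ultimately have "c * Qvec t j N = 0" by (simp add: cscale_def)
    then have "c = 0" using Qvec_N[OF g j] by simp
    moreover have "cscale 0 (Qvec t j) = 0" by (simp add: cscale_def fun_eq_iff)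
    ultimately show "y \<in> Ipart t j" using c by simp
  qed
qed

lemma indep_family_frame:
  assumes g: "good t"
  shows "indep_family {1..n} (frame t)"
proof (rule indep_family_of_dim_span)
  have Fn: "cvs.span (frame t ` {1..n}) = cvs.span (insert (P t) (Avec t ` Iidx n))"
    using flag_frame_hi[OF iN order_refl] pn by (simp add: flag_of_eq_span Qvec_def)
  have "P t \<notin> Ipart t n"
  proof
    assume "P t \<in> Ipart t n"
    then have "P t N = 0" using Ipart_subset_Espan[of n t] last_coord_Espan_q by blast
    then show False using g by (simp add: good_def)
  qed
  moreover have "fin_dim (Avec t ` Iidx n)"
    unfolding fin_dim_def by (intro exI[of _ "Avec t ` Iidx n"]) (simp add: finite_Iidx cvs.span_superset)
  ultimately have "cvs.dim (Avec t ` Iidx n) + 1 \<le> cvs.dim (cvs.span (insert (P t) (Avec t ` Iidx n)))"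
    by (intro dim_insert_ge) (simp_all add: Ipart_def)
  moreover have "cvs.dim (Avec t ` Iidx n) = n - 1"
    using dim_Ipart[OF g order_refl] card_Iidx[of n] iN by (simp add: Ipart_def)
  moreover have "cvs.dim (cvs.span (frame t ` {1..n})) \<le> n"
    using cvs.dim_le_card'[of "frame t ` {1..n}"] card_image_le[of "{1..n}" "frame t"] by simp
  ultimately show "cvs.dim (cvs.span (frame t ` {1..n})) = card {1..n}"
    using cvs.span_eq_dim[OF Fn] n2 by simp
qed simp

lemma flag_frame_in_Fl: "good t \<Longrightarrow> flag_of n (frame t) \<in> Fl N n"
  using flag_of_in_Fl frame_in_CN indep_family_frame by blast

lemma flag_frame_in_schubert:
  assumes g: "good t"
  shows "flag_of n (frame t) \<in> schubert_cell N n (wi N n i)"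
proof (rule in_schubert_wi[OF flag_frame_in_Fl[OF g] N_bounds(2) i1 iN])
  fix j assume j: "j < i"
  have "level j = n - 1 - j" using j by (simp add: level_def)
  then show "flag_of n (frame t) j \<subseteq> Espan (n - 1) \<and> flag_of n (frame t) j \<inter> Espan (n - 1 - j) \<subseteq> {0}"
    using flag_frame_lo[OF j] Ipart_subset_Espan[of j t] Ipart_inter_Espan[OF g, of j] j iN by auto
next
  fix j assume j: "i \<le> j" "j \<le> n"
  have eq: "flag_of n (frame t) j \<inter> Espan (N - 1) = Ipart t j" by (rule flag_frame_inter_hyperplane[OF g j])
  have "n - j \<le> N - 1" "level j = n - j" using N_bounds j i1 by (auto simp: level_def)
  then have "flag_of n (frame t) j \<inter> Espan (n - j) \<subseteq> Ipart t j \<inter> Espan (level j)"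
    using eq Espan_mono[of "n - j" "N - 1"] by auto
  then show "flag_of n (frame t) j \<inter> Espan (N - 1) \<subseteq> Espan (n - 1)
      \<and> cvs.dim (flag_of n (frame t) j \<inter> Espan (N - 1)) = j - 1
      \<and> flag_of n (frame t) j \<inter> Espan (n - j) \<subseteq> {0}"
    using eq Ipart_subset_Espan[OF j(2)] dim_Ipart[OF g j(2)] card_Iidx[OF j(2)] Ipart_inter_Espan[OF g j(2)] j
    by auto
qed

lemma xmap_frame:
  assumes l: "l \<in> {1..n}"
  shows "xmap n (frame t l) \<in> flag_of n (frame t) (i - 1)"
proof -
  have F0: "flag_of n (frame t) (i - 1) = cvs.span (Avec t ` {1..i - 1})"
    using flag_frame_lo[of "i - 1" t] i1 by (simp add: Ipart_def Iidx_def)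
  have xP: "xmap n (P t) \<in> flag_of n (frame t) (i - 1)"
  proof -
    have "lincomb {1..i - 1} \<alpha> (Avec t) \<in> cvs.span (Avec t ` {1..i - 1})" by (rule lincomb_in_span) simp
    moreover have "(if 2 * q < N then 0 else cscale t (Avec t 1)) \<in> cvs.span (Avec t ` {1..i - 1})"
    proof (cases "2 * q < N")
      case False
      then have "Avec t 1 \<in> Avec t ` {1..i - 1}" using i_ge_2_if_N_eq by simp
      then show ?thesis using False by (simp add: cvs.span_base cvs.span_scale)
    qed (simp add: cvs.span_zero)
    ultimately show ?thesis unfolding xmap_P F0 by (rule cvs.span_add)
  qed
  show ?thesis
  proof (cases "l = p")
    case True
    then show ?thesis using xP by (simp add: frame_p)
  next
    case False
    show ?thesis
    proof (cases "l = i")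
      case True
      then have "i \<in> Iidx n" using i_in_Iidx[of n] pn False by simp
      then have "xmap n (frame t i) = cscale t (xmap n (P t))"
        using frame_i[of t] False True Avec_in_Espan[of n i t] by (simp add: xmap_add xmap_scale xmap_Espan)
      then show ?thesis using True xP F0 by (simp add: cvs.span_scale)
    next
      case False2: False
      have "l \<in> Iidx n" using l False False2 by (auto simp: Iidx_def)
      then show ?thesis
        using frame_other[OF False False2] xmap_Avec[of n l t] F0 by (simp add: cvs.span_zero)
    qed
  qed
qed

lemma flag_frame_in_Zflags:
  assumes g: "good t"
  shows "flag_of n (frame t) \<in> Zflags N n i"
proof -
  let ?F = "flag_of n (frame t)"
  have FFl: "?F \<in> Fl N n" by (rule flag_frame_in_Fl[OF g])
  have "Ipart t n = Espan (n - 1)"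
  proof (rule subspace_eq_of_dim_le[OF fin_dim_Espan Ipart_subset_Espan[OF order_refl]])
    show "cvs.subspace (Ipart t n)" by (simp add: Ipart_def cvs.subspace_span)
    show "cvs.dim (Espan (n - 1)) \<le> cvs.dim (Ipart t n)"
      using dim_Ipart[OF g order_refl] card_Iidx[of n] iN dim_Espan by simp
  qed
  moreover have "Ipart t n \<subseteq> ?F n"
    using flag_frame_hi[OF iN order_refl] unfolding Ipart_def by (auto intro: cvs.span_mono[THEN subsetD])
  moreover have "xmap n y \<in> ?F (i - 1)" if "y \<in> ?F n" for y
  proof -
    have "xmap n ` (frame t ` {1..n}) \<subseteq> ?F (i - 1)" using xmap_frame by auto
    then have "xmap n ` ?F n \<subseteq> ?F (i - 1)"
      unfolding flag_of_eq_span[OF order_refl] using Fl_subspace[OF FFl] iN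
      by (intro xmap_span_subset) auto
    then show ?thesis using that by blast
  qed
  ultimately show ?thesis
    using FFl flag_frame_lo[of "i - 1" t] Ipart_subset_Espan[of "i - 1" t] Fl_subset_CN[OF FFl order_refl] i1 iN
    by (auto simp: Zflags_def)
qed

end

section \<open>The components \<open>K\<^sup>i\<close>\<close>

lemma seq_tendsto_0_avoiding_finite:
  assumes "finite {t::complex. \<not> G t}"
  obtains tk where "\<And>k. G (tk k)" "tk \<longlonglongrightarrow> 0"
proof -
  define f where "f m = complex_of_real (inverse (real (Suc m)))" for m
  have "inj f" by (auto simp: inj_def f_def)
  then have "finite {m. \<not> G (f m)}" using finite_vimageI[OF assms] by (simp add: vimage_def)
  then obtain M where M: "\<And>m. \<not> G (f m) \<Longrightarrow> m < M" by (auto simp: finite_nat_set_iff_bounded)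
  have "f \<longlonglongrightarrow> 0"
    using tendsto_of_real[OF LIMSEQ_inverse_real_of_nat, where 'a = complex]
    unfolding f_def by (simp only: of_real_0)
  then have "(\<lambda>k. f (k + M)) \<longlonglongrightarrow> 0" by (rule LIMSEQ_ignore_initial_segment)
  moreover have "G (f (k + M))" for k using M[of "k + M"] by linarith
  ultimately show ?thesis using that[of "\<lambda>k. f (k + M)"] by blast
qed

lemma Kcomp_subset_Zflags:
  assumes "2 \<le> n" "n - 1 \<le> s" "1 \<le> i" "i \<le> n"
  shows "Kcomp n s i \<subseteq> Zflags (n + s - 1) n i"
proof
  fix V assume "V \<in> Kcomp n s i"
  then obtain U u where U: "\<And>k. flag_of n (U k) \<in> schubert_cell (n + s - 1) n (wi (n + s - 1) n i) \<inter> Yfib n s"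
    and u: "flag_of n u = V" "V \<in> Fl (n + s - 1) n" and lim: "\<forall>j m. (\<lambda>k. U k j m) \<longlonglongrightarrow> u j m"
    unfolding Kcomp_def flag_closure_def by blast
  have "flag_of n (U k) \<in> Zflags (n + s - 1) n i" for k
    using schubert_Yfib_subset_Zflags[OF refl assms] U[of k] by blast
  then show "V \<in> Zflags (n + s - 1) n i"
    using Zflags_closed[OF assms(3,4) _ _ lim] u by blast
qed

lemma Zflags_subset_Kcomp:
  assumes n2: "2 \<le> n" and s: "n - 1 \<le> s" and i: "1 \<le> i" "i \<le> n" and adm: "s = n - 1 \<Longrightarrow> 2 \<le> i"
  shows "Zflags (n + s - 1) n i \<subseteq> Kcomp n s i"
proof
  define N where "N = n + s - 1"
  fix V assume "V \<in> Zflags (n + s - 1) n i"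
  then have V: "V \<in> Fl N n" "V (i - 1) \<subseteq> Espan (n - 1)" "Espan (n - 1) \<subseteq> V n"
      "V n \<subseteq> {v \<in> CN N. xmap n v \<in> V (i - 1)}" and VY: "V \<in> Yfib n s"
    using Zflags_subset_Yfib[OF N_def n2 s i] by (auto simp: Zflags_def N_def)
  obtain u p where u: "flag_of n u = V" "i \<le> p" "p \<le> n" "\<forall>l\<in>{1..n} - {p}. u l \<in> Espan (n - 1)"
    using Zflags_adapted_frame[OF n2 i V(1-3)] by blast
  have "u p \<in> V n" using u(1-3) i cvs.span_base[of "u p"] by (auto simp: flag_of_eq_span)
  then have "xmap n (u p) \<in> cvs.span (u ` {1..i - 1})"
    using V(4) u(1) i flag_of_eq_span[of "i - 1" n u] by auto
  then obtain \<alpha> where \<alpha>: "xmap n (u p) = lincomb {1..i - 1} \<alpha> u" by (auto simp: in_span_image_iff)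
  interpret D: deformation n s i N p u \<alpha>
    using N_def n2 s i adm u \<alpha> frame_in_CN_of_flag_of[of n u N] V(1) by unfold_locales auto
  obtain tk where tk: "\<And>k. D.good (tk k)" "tk \<longlonglongrightarrow> 0"
    using seq_tendsto_0_avoiding_finite[OF D.finite_not_good] by blast
  have "V \<in> flag_closure N n (schubert_cell N n (wi N n i) \<inter> Yfib n s)"
    unfolding flag_closure_def
  proof (intro CollectI conjI exI)
    show "\<forall>k. flag_of n (D.frame (tk k)) \<in> schubert_cell N n (wi N n i) \<inter> Yfib n s"
      using D.flag_frame_in_schubert D.flag_frame_in_Zflags Zflags_subset_Yfib[OF N_def n2 s i] tk(1)
      by blast
    show "\<forall>j m. (\<lambda>k. D.frame (tk k) j m) \<longlonglongrightarrow> u j m" using D.frame_lim[OF tk(2)] by blast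
  qed (use V(1) u(1) in auto)
  then show "V \<in> Kcomp n s i" using VY unfolding Kcomp_def N_def by simp
qed

theorem theorem3p1:
  fixes n s i :: nat
  assumes "n \<ge> 2" and "s \<ge> n - 1"
    and "(s > n - 1 \<and> 1 \<le> i \<and> i \<le> n) \<or> (s = n - 1 \<and> 2 \<le> i \<and> i \<le> n)"
  shows "Kcomp n s i =
    {V \<in> Fl (n + s - 1) n.
       V (i - 1) \<subseteq> xmap n ` CN (n + s - 1) \<and>
       xmap n ` CN (n + s - 1) \<subseteq> V n \<and>
       V n \<subseteq> {v \<in> CN (n + s - 1). xmap n v \<in> V (i - 1)}}"
proof -
  have i: "1 \<le> i" "i \<le> n" and adm: "s = n - 1 \<Longrightarrow> 2 \<le> i" using assms(3) by auto
  have "xmap n ` CN (n + s - 1) = Espan (n - 1)" using assms(1,2) by (intro image_xmap_CN) auto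
  moreover have "Kcomp n s i = Zflags (n + s - 1) n i"
    using Kcomp_subset_Zflags[OF assms(1,2) i] Zflags_subset_Kcomp[OF assms(1,2) i adm] by blast
  ultimately show ?thesis by (simp add: Zflags_def)
qed

end
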